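(* Let $R$ be an $\omega$-algebraic lattice, and let $D,C$ be the inverse limits of $C_0=\{\bot\}$, $D_n=[C_n\to R]$, $C_{n+1}=D_n\times C_n$, so that $D\cong[C\to R]$ and $C\cong D\times C$. For each $A\in\{R,D,C\}$, the poset $(\mathcal F_A,\subseteq)$ of filters over $(\Lambda_A,\le_A)$ is isomorphic to $A$.
   Context: Domains. An $\omega$-algebraic lattice is a complete lattice in which every element is the join of the compact elements below it, and which has countably many compact elements. $\mathcal K(R)$ denotes the compact elements of $R$, $\bot$ is the bottom and $\sqcup$ is the join. Type languages: - $\Lambda_R$: $\rho::=\psi_a\mid\omega\mid\rho\wedge\rho$, with one constant $\psi_a$ for each $a\in\mathcal K(R)$. - $\Lambda_D$: $\delta::=\rho\mid\kappa\to\rho\mid\omega\mid\delta\wedge\delta$, with $\rho\in\Lambda_R$. - $\Lambda_C$: $\kappa::=\delta\times\kappa\mid\omega\mid\kappa\wedge\kappa$. An intersection type theory on such a language is a reflexive, transitive relation $\le$ satisfying $\sigma\wedge\tau\le\sigma$, $\sigma\wedge\tau\le\tau$, $\sigma\le\omega$, and, if $\rho\le\sigma$ and $\rho\le\tau$, then $\rho\le\sigma\wedge\tau$. We write $\sigma\sim\tau$ when $\sigma\le\tau\le\sigma$. The relations are defined as follows: - $\le_R$ is the least intersection type theory on $\Lambda_R$ with $\psi_\bot\sim_R\omega$ and $\psi_{a\sqcup b}\sim_R\psi_a\wedge\psi_b$. - $\le_D$ and $\le_C$ are the least intersection type theories on $\Lambda_D$ and $\Lambda_C$ closed under the following: - if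 $\rho_1\le_R\rho_2$ then $\rho_1\le_D\rho_2$; - $\omega\le_D\omega\to\omega$; - $\psi_a\le_D\omega\to\psi_a$ and $\omega\to\psi_a\le_D\psi_a$; - $\omega\le_C\omega\times\omega$; - $(\kappa\to\rho_1)\wedge(\kappa\to\rho_2)\le_D\kappa\to(\rho_1\wedge\rho_2)$; - $(\delta_1\times\kappa_1)\wedge(\delta_2\times\kappa_2)\le_C(\delta_1\wedge\delta_2)\times(\kappa_1\wedge\kappa_2)$; - if $\kappa_2\le_C\kappa_1$ and $\rho_1\le_R\rho_2$ then $\kappa_1\to\rho_1\le_D\kappa_2\to\rho_2$; - if $\delta_1\le_D\delta_2$ and $\kappa_1\le_C\kappa_2$ then $\delta_1\times\kappa_1\le_C\delta_2\times\kappa_2$. A filter over $(\Lambda_A,\le_A)$ is a set $f\subseteq\Lambda_A$ with $\omega\in f$, upward closed under $\le_A$, and closed under $\wedge$. $\mathcal F_A$ denotes the set of such filters. *)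

theory Defs
  imports Main "HOL-Library.Countable_Set"
begin

definition directed_in :: "('b \<Rightarrow> 'b \<Rightarrow> bool) \<Rightarrow> 'b set \<Rightarrow> bool" where
  "directed_in le T \<longleftrightarrow> T \<noteq> {} \<and> (\<forall>x\<in>T. \<forall>y\<in>T. \<exists>z\<in>T. le x z \<and> le y z)"

definition is_lub_in :: "'b set \<Rightarrow> ('b \<Rightarrow> 'b \<Rightarrow> bool) \<Rightarrow> 'b set \<Rightarrow> 'b \<Rightarrow> bool" where
  "is_lub_in S le T s \<longleftrightarrow> s \<in> S \<and> (\<forall>t\<in>T. le t s) \<and> (\<forall>u\<in>S. (\<forall>t\<in>T. le t u) \<longrightarrow> le s u)"

definition compact_in :: "'b set \<Rightarrow> ('b \<Rightarrow> 'b \<Rightarrow> bool) \<Rightarrow> 'b \<Rightarrow> bool" where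
  "compact_in S le c \<longleftrightarrow> c \<in> S \<and>
     (\<forall>T s. T \<subseteq> S \<longrightarrow> directed_in le T \<longrightarrow> is_lub_in S le T s \<longrightarrow> le c s \<longrightarrow> (\<exists>t\<in>T. le c t))"

abbreviation compactR :: "'a::complete_lattice \<Rightarrow> bool" where
  "compactR c \<equiv> compact_in UNIV (\<le>) c"

definition order_iso :: "'b set \<Rightarrow> ('b \<Rightarrow> 'b \<Rightarrow> bool) \<Rightarrow> 'c set \<Rightarrow> ('c \<Rightarrow> 'c \<Rightarrow> bool) \<Rightarrow> bool" where
  "order_iso A leA B leB \<longleftrightarrow>
     (\<exists>\<phi>. bij_betw \<phi> A B \<and> (\<forall>x\<in>A. \<forall>y\<in>A. leA x y \<longleftrightarrow> leB (\<phi> x) (\<phi> y)))"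

text \<open>Universal carrier for the levels C_n, D_n. A pair (d,c) of C_{n+1} = D_n \<times> C_n is UPair d c;
  the unique element of C_0 is UUnit; a Scott-continuous f : C_n \<rightarrow> R is represented by
  UFun g where g i = f (k_i) for an enumeration (k_i) of the compact elements of C_n
  (a continuous map on an algebraic lattice is determined by its values on compacts).\<close>
datatype 'a U = UUnit | UPair "'a U" "'a U" | UFun "nat \<Rightarrow> 'a"

fun unF :: "'a::complete_lattice U \<Rightarrow> nat \<Rightarrow> 'a" where
  "unF (UFun g) = g"
| "unF _ = (\<lambda>_. bot)"

type_synonym 'a level = "'a U set \<times> ('a U \<Rightarrow> 'a U \<Rightarrow> bool)"

definition KC :: "'a level \<Rightarrow> 'a U set" where
  "KC L = {c. compact_in (fst L) (snd L) c}"

definition enum :: "'a level \<Rightarrow> nat \<Rightarrow> 'a U" where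
  "enum L i = from_nat_into (KC L) i"

text \<open>The function space [C \<rightarrow> R] over a level C (monotone maps on compacts of C).\<close>
definition D_of :: "('a::complete_lattice) level \<Rightarrow> 'a U set" where
  "D_of L = {UFun g | g. \<forall>i j. snd L (enum L i) (enum L j) \<longrightarrow> g i \<le> g j}"

definition leD_of :: "('a::complete_lattice) level \<Rightarrow> 'a U \<Rightarrow> 'a U \<Rightarrow> bool" where
  "leD_of L f f' \<longleftrightarrow> (\<forall>i. unF f i \<le> unF f' i)"

definition appD :: "('a::complete_lattice) level \<Rightarrow> 'a U \<Rightarrow> 'a U \<Rightarrow> 'a" where
  "appD L f x = (SUP i\<in>{i. snd L (enum L i) x}. unF f i)"

text \<open>lev n is the poset C_n: C_0 = {bot}, C_{n+1} = D_n \<times> C_n with D_n = [C_n \<rightarrow> R].\<close>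
primrec lev :: "nat \<Rightarrow> ('a::complete_lattice) level" where
  "lev 0 = ({UUnit}, (\<lambda>x y. True))"
| "lev (Suc n) = ({UPair d c | d c. d \<in> D_of (lev n) \<and> c \<in> fst (lev n)},
     (\<lambda>x y. case (x, y) of (UPair d c, UPair d' c') \<Rightarrow> leD_of (lev n) d d' \<and> snd (lev n) c c'
                         | _ \<Rightarrow> False))"

definition Cset :: "nat \<Rightarrow> ('a::complete_lattice) U set" where "Cset n = fst (lev n)"
definition leC_lev :: "nat \<Rightarrow> ('a::complete_lattice) U \<Rightarrow> 'a U \<Rightarrow> bool" where "leC_lev n = snd (lev n)"
definition Dset :: "nat \<Rightarrow> ('a::complete_lattice) U set" where "Dset n = D_of (lev n)"
definition leD_lev :: "nat \<Rightarrow> ('a::complete_lattice) U \<Rightarrow> 'a U \<Rightarrow> bool" where "leD_lev n = leD_of (lev n)"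

text \<open>emb n = (eC_n, pC_n, eD_n, pD_n): embedding-projection pairs
  eC_n : C_n \<rightarrow> C_{n+1}, pC_n : C_{n+1} \<rightarrow> C_n, eD_n : D_n \<rightarrow> D_{n+1}, pD_n : D_{n+1} \<rightarrow> D_n, with
  eC_0 x = (bot, bot), pC_0 y = bot, eD_n f = f \<circ> pC_n, pD_n g = g \<circ> eC_n,
  eC_{n+1} (d,c) = (eD_n d, eC_n c), pC_{n+1} (d,c) = (pD_n d, pC_n c).\<close>
primrec emb :: "nat \<Rightarrow> (('a::complete_lattice) U \<Rightarrow> 'a U) \<times> ('a U \<Rightarrow> 'a U) \<times> ('a U \<Rightarrow> 'a U) \<times> ('a U \<Rightarrow> 'a U)" where
  "emb 0 = (let eC = (\<lambda>_. UPair (UFun (\<lambda>_. bot)) UUnit); pC = (\<lambda>_. UUnit) in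
     (eC, pC,
      (\<lambda>f. UFun (\<lambda>i. appD (lev 0) f (pC (enum (lev 1) i)))),
      (\<lambda>g. UFun (\<lambda>i. appD (lev 1) g (eC (enum (lev 0) i))))))"
| "emb (Suc n) = (case emb n of (eC, pC, eD, pD) \<Rightarrow>
     let eC' = (\<lambda>x. case x of UPair d c \<Rightarrow> UPair (eD d) (eC c) | _ \<Rightarrow> UUnit);
         pC' = (\<lambda>x. case x of UPair d c \<Rightarrow> UPair (pD d) (pC c) | _ \<Rightarrow> UUnit) in
     (eC', pC',
      (\<lambda>f. UFun (\<lambda>i. appD (lev (Suc n)) f (pC' (enum (lev (Suc (Suc n))) i)))),
      (\<lambda>g. UFun (\<lambda>i. appD (lev (Suc (Suc n))) g (eC' (enum (lev (Suc n)) i))))))"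

definition pC :: "nat \<Rightarrow> ('a::complete_lattice) U \<Rightarrow> 'a U" where "pC n = fst (snd (emb n))"
definition pD :: "nat \<Rightarrow> ('a::complete_lattice) U \<Rightarrow> 'a U" where "pD n = snd (snd (snd (emb n)))"

definition Dinf :: "(nat \<Rightarrow> ('a::complete_lattice) U) set" where
  "Dinf = {x. \<forall>n. x n \<in> Dset n \<and> pD n (x (Suc n)) = x n}"
definition leDinf :: "(nat \<Rightarrow> ('a::complete_lattice) U) \<Rightarrow> (nat \<Rightarrow> 'a U) \<Rightarrow> bool" where
  "leDinf x y \<longleftrightarrow> (\<forall>n. leD_lev n (x n) (y n))"
definition Cinf :: "(nat \<Rightarrow> ('a::complete_lattice) U) set" where
  "Cinf = {x. \<forall>n. x n \<in> Cset n \<and> pC n (x (Suc n)) = x n}"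
definition leCinf :: "(nat \<Rightarrow> ('a::complete_lattice) U) \<Rightarrow> (nat \<Rightarrow> 'a U) \<Rightarrow> bool" where
  "leCinf x y \<longleftrightarrow> (\<forall>n. leC_lev n (x n) (y n))"

text \<open>One syntax for all three languages; Lambda_R, Lambda_D, Lambda_C are carved out by isR/isD/isC.\<close>
datatype 'a ty = Psi 'a | Om | Conj "'a ty" "'a ty" | Arr "'a ty" "'a ty" | Times "'a ty" "'a ty"

fun isR :: "('a::complete_lattice) ty \<Rightarrow> bool" where
  "isR (Psi a) = compactR a"
| "isR Om = True"
| "isR (Conj s t) = (isR s \<and> isR t)"
| "isR (Arr _ _) = False"
| "isR (Times _ _) = False"

fun isD :: "('a::complete_lattice) ty \<Rightarrow> bool" and isC :: "('a::complete_lattice) ty \<Rightarrow> bool" where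
  "isD (Psi a) = compactR a"
| "isD Om = True"
| "isD (Conj s t) = (isD s \<and> isD t)"
| "isD (Arr k r) = (isC k \<and> isR r)"
| "isD (Times _ _) = False"
| "isC (Psi _) = False"
| "isC Om = True"
| "isC (Conj s t) = (isC s \<and> isC t)"
| "isC (Arr _ _) = False"
| "isC (Times d k) = (isD d \<and> isC k)"

inductive leR :: "('a::complete_lattice) ty \<Rightarrow> 'a ty \<Rightarrow> bool" where
  R_refl: "isR s \<Longrightarrow> leR s s"
| R_trans: "leR s t \<Longrightarrow> leR t u \<Longrightarrow> leR s u"
| R_conjL: "isR s \<Longrightarrow> isR t \<Longrightarrow> leR (Conj s t) s"
| R_conjR: "isR s \<Longrightarrow> isR t \<Longrightarrow> leR (Conj s t) t"
| R_top: "isR s \<Longrightarrow> leR s Om"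
| R_glb: "leR r s \<Longrightarrow> leR r t \<Longrightarrow> leR r (Conj s t)"
| R_bot1: "leR (Psi bot) Om"
| R_bot2: "leR Om (Psi bot)"
| R_join1: "compactR a \<Longrightarrow> compactR b \<Longrightarrow> leR (Psi (sup a b)) (Conj (Psi a) (Psi b))"
| R_join2: "compactR a \<Longrightarrow> compactR b \<Longrightarrow> leR (Conj (Psi a) (Psi b)) (Psi (sup a b))"

inductive leD :: "('a::complete_lattice) ty \<Rightarrow> 'a ty \<Rightarrow> bool"
      and leC :: "('a::complete_lattice) ty \<Rightarrow> 'a ty \<Rightarrow> bool" where
  D_refl: "isD s \<Longrightarrow> leD s s"
| D_trans: "leD s t \<Longrightarrow> leD t u \<Longrightarrow> leD s u"
| D_conjL: "isD s \<Longrightarrow> isD t \<Longrightarrow> leD (Conj s t) s"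
| D_conjR: "isD s \<Longrightarrow> isD t \<Longrightarrow> leD (Conj s t) t"
| D_top: "isD s \<Longrightarrow> leD s Om"
| D_glb: "leD r s \<Longrightarrow> leD r t \<Longrightarrow> leD r (Conj s t)"
| C_refl: "isC s \<Longrightarrow> leC s s"
| C_trans: "leC s t \<Longrightarrow> leC t u \<Longrightarrow> leC s u"
| C_conjL: "isC s \<Longrightarrow> isC t \<Longrightarrow> leC (Conj s t) s"
| C_conjR: "isC s \<Longrightarrow> isC t \<Longrightarrow> leC (Conj s t) t"
| C_top: "isC s \<Longrightarrow> leC s Om"
| C_glb: "leC r s \<Longrightarrow> leC r t \<Longrightarrow> leC r (Conj s t)"
| D_fromR: "leR r1 r2 \<Longrightarrow> leD r1 r2"
| D_omArr: "leD Om (Arr Om Om)"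
| D_psiArr1: "compactR a \<Longrightarrow> leD (Psi a) (Arr Om (Psi a))"
| D_psiArr2: "compactR a \<Longrightarrow> leD (Arr Om (Psi a)) (Psi a)"
| C_omTimes: "leC Om (Times Om Om)"
| D_arrConj: "isC k \<Longrightarrow> isR r1 \<Longrightarrow> isR r2 \<Longrightarrow>
     leD (Conj (Arr k r1) (Arr k r2)) (Arr k (Conj r1 r2))"
| C_timesConj: "isD d1 \<Longrightarrow> isD d2 \<Longrightarrow> isC k1 \<Longrightarrow> isC k2 \<Longrightarrow>
     leC (Conj (Times d1 k1) (Times d2 k2)) (Times (Conj d1 d2) (Conj k1 k2))"
| D_arrMono: "leC k2 k1 \<Longrightarrow> leR r1 r2 \<Longrightarrow> leD (Arr k1 r1) (Arr k2 r2)"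
| C_timesMono: "leD d1 d2 \<Longrightarrow> leC k1 k2 \<Longrightarrow> leC (Times d1 k1) (Times d2 k2)"

definition filters :: "'a ty set \<Rightarrow> ('a ty \<Rightarrow> 'a ty \<Rightarrow> bool) \<Rightarrow> 'a ty set set" where
  "filters L le = {f. f \<subseteq> L \<and> Om \<in> f \<and> (\<forall>s\<in>f. \<forall>t\<in>L. le s t \<longrightarrow> t \<in> f)
                     \<and> (\<forall>s\<in>f. \<forall>t\<in>f. Conj s t \<in> f)}"

end

theory Submission
  imports Defs
begin

text \<open>Every C-type (D-type) denotes at each level \<open>n\<close> a compact element of \<open>C\<^sub>n\<close> (\<open>D\<^sub>n\<close>), and
  these denotations are compatible with the projections, so that they form an element of the
  inverse limit. The type theories are sound and complete for this semantics: \<open>s \<le> t\<close> holds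
  iff the denotation of \<open>t\<close> lies below that of \<open>s\<close> at every level. Moreover every compact element
  of a level is denoted by a type (definability). A filter is then mapped to the levelwise lub of
  the denotations of its members, and an element \<open>x\<close> of the limit to the filter of types whose
  denotations lie below \<open>x\<close>. These maps are monotone, and compactness of the denotations together
  with algebraicity of the levels makes them mutually inverse. For \<open>R\<close> the same argument runs
  directly through the compact elements of \<open>R\<close>.\<close>

section \<open>Posets, least upper bounds and compact elements on a carrier\<close>

definition poset_on :: "'b set \<Rightarrow> ('b \<Rightarrow> 'b \<Rightarrow> bool) \<Rightarrow> bool" where
  "poset_on S le \<longleftrightarrow> (\<forall>x\<in>S. le x x) \<and> (\<forall>x\<in>S. \<forall>y\<in>S. le x y \<longrightarrow> le y x \<longrightarrow> x = y)
     \<and> (\<forall>x\<in>S. \<forall>y\<in>S. \<forall>z\<in>S. le x y \<longrightarrow> le y z \<longrightarrow> le x z)"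

definition lub_in :: "'b set \<Rightarrow> ('b \<Rightarrow> 'b \<Rightarrow> bool) \<Rightarrow> 'b set \<Rightarrow> 'b" where
  "lub_in S le A = (THE s. is_lub_in S le A s)"

definition omega_algebraic_on :: "'b set \<Rightarrow> ('b \<Rightarrow> 'b \<Rightarrow> bool) \<Rightarrow> bool" where
  "omega_algebraic_on S le \<longleftrightarrow> poset_on S le \<and> (\<forall>A\<subseteq>S. \<exists>s. is_lub_in S le A s)
     \<and> (\<forall>x\<in>S. is_lub_in S le {c. compact_in S le c \<and> le c x} x)
     \<and> countable {c. compact_in S le c}"

lemma poset_on_refl: "poset_on S le \<Longrightarrow> x \<in> S \<Longrightarrow> le x x"
  unfolding poset_on_def by blast

lemma poset_on_antisym: "poset_on S le \<Longrightarrow> x \<in> S \<Longrightarrow> y \<in> S \<Longrightarrow> le x y \<Longrightarrow> le y x \<Longrightarrow> x = y"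
  unfolding poset_on_def by blast

lemma poset_on_trans:
  "poset_on S le \<Longrightarrow> x \<in> S \<Longrightarrow> y \<in> S \<Longrightarrow> z \<in> S \<Longrightarrow> le x y \<Longrightarrow> le y z \<Longrightarrow> le x z"
  unfolding poset_on_def by blast

lemma omega_algebraic_on_poset: "omega_algebraic_on S le \<Longrightarrow> poset_on S le"
  unfolding omega_algebraic_on_def by blast

lemma omega_algebraic_on_ex_lub: "omega_algebraic_on S le \<Longrightarrow> A \<subseteq> S \<Longrightarrow> \<exists>s. is_lub_in S le A s"
  unfolding omega_algebraic_on_def by blast

lemma omega_algebraic_on_compact_approx:
  "omega_algebraic_on S le \<Longrightarrow> x \<in> S \<Longrightarrow> is_lub_in S le {c. compact_in S le c \<and> le c x} x"
  unfolding omega_algebraic_on_def by blast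

lemma omega_algebraic_on_countable: "omega_algebraic_on S le \<Longrightarrow> countable {c. compact_in S le c}"
  unfolding omega_algebraic_on_def by blast

lemma is_lub_in_mem: "is_lub_in S le A s \<Longrightarrow> s \<in> S"
  unfolding is_lub_in_def by blast

lemma is_lub_in_upper: "is_lub_in S le A s \<Longrightarrow> t \<in> A \<Longrightarrow> le t s"
  unfolding is_lub_in_def by blast

lemma is_lub_in_least: "is_lub_in S le A s \<Longrightarrow> u \<in> S \<Longrightarrow> (\<And>t. t \<in> A \<Longrightarrow> le t u) \<Longrightarrow> le s u"
  unfolding is_lub_in_def by blast

lemma is_lub_inI:
  "s \<in> S \<Longrightarrow> (\<And>t. t \<in> A \<Longrightarrow> le t s) \<Longrightarrow> (\<And>u. u \<in> S \<Longrightarrow> \<forall>t\<in>A. le t u \<Longrightarrow> le s u)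
   \<Longrightarrow> is_lub_in S le A s"
  unfolding is_lub_in_def by blast

lemma is_lub_in_unique: "poset_on S le \<Longrightarrow> is_lub_in S le A s \<Longrightarrow> is_lub_in S le A s' \<Longrightarrow> s = s'"
  unfolding is_lub_in_def using poset_on_antisym[of S le s s'] by blast

lemma is_lub_in_singleton: "poset_on S le \<Longrightarrow> c \<in> S \<Longrightarrow> is_lub_in S le {c} c"
  unfolding is_lub_in_def using poset_on_refl by fastforce

lemma is_lub_in_superset:
  "is_lub_in S le X x \<Longrightarrow> X \<subseteq> Y \<Longrightarrow> Y \<subseteq> S \<Longrightarrow> \<forall>y\<in>Y. le y x \<Longrightarrow> is_lub_in S le Y x"
  unfolding is_lub_in_def by blast

lemma lub_in_eq: "poset_on S le \<Longrightarrow> is_lub_in S le A s \<Longrightarrow> lub_in S le A = s"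
  unfolding lub_in_def by (rule the_equality) (auto intro: is_lub_in_unique)

lemma lub_in_is_lub: "omega_algebraic_on S le \<Longrightarrow> A \<subseteq> S \<Longrightarrow> is_lub_in S le A (lub_in S le A)"
  using lub_in_eq[OF omega_algebraic_on_poset] omega_algebraic_on_ex_lub by metis

lemma directed_inD: "directed_in le T \<Longrightarrow> x \<in> T \<Longrightarrow> y \<in> T \<Longrightarrow> \<exists>z\<in>T. le x z \<and> le y z"
  unfolding directed_in_def by blast

lemma directed_in_nonempty: "directed_in le T \<Longrightarrow> T \<noteq> {}"
  unfolding directed_in_def by blast

lemma directed_in_image:
  assumes "directed_in le T" and "\<And>x y. x \<in> T \<Longrightarrow> y \<in> T \<Longrightarrow> le x y \<Longrightarrow> le' (f x) (f y)"
  shows "directed_in le' (f ` T)"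
  unfolding directed_in_def
proof (intro conjI ballI)
  show "f ` T \<noteq> {}" using directed_in_nonempty[OF assms(1)] by blast
  fix x' y' assume "x' \<in> f ` T" "y' \<in> f ` T"
  then obtain x y where xy: "x \<in> T" "y \<in> T" "x' = f x" "y' = f y" by blast
  then obtain z where "z \<in> T" "le x z" "le y z" using directed_inD[OF assms(1)] by blast
  then show "\<exists>z'\<in>f ` T. le' x' z' \<and> le' y' z'" using xy assms(2) by blast
qed

lemma directed_in_finite_ub:
  assumes po: "poset_on S le" and T: "T \<subseteq> S" "directed_in le T" and X: "finite X" "X \<subseteq> T"
  shows "\<exists>t\<in>T. \<forall>x\<in>X. le x t"
  using X
proof (induction X rule: finite_induct)
  case empty then show ?case using directed_in_nonempty[OF T(2)] by auto
next
  case (insert x X)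
  obtain t where t: "t \<in> T" "\<forall>y\<in>X. le y t" using insert by blast
  obtain z where z: "z \<in> T" "le x z" "le t z" using directed_inD[OF T(2)] insert.prems t(1) by blast
  have "le y z" if "y \<in> X" for y
    using poset_on_trans[OF po, of y t z] that t z insert.prems T(1) by blast
  then show ?case using z by blast
qed

lemma compact_in_mem: "compact_in S le c \<Longrightarrow> c \<in> S"
  unfolding compact_in_def by blast

lemma compact_inD:
  "compact_in S le c \<Longrightarrow> T \<subseteq> S \<Longrightarrow> directed_in le T \<Longrightarrow> is_lub_in S le T s \<Longrightarrow> le c s
   \<Longrightarrow> \<exists>t\<in>T. le c t"
  unfolding compact_in_def by blast

lemma compact_inI:
  "c \<in> S \<Longrightarrow> (\<And>T s. T \<subseteq> S \<Longrightarrow> directed_in le T \<Longrightarrow> is_lub_in S le T s \<Longrightarrow> le c s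
   \<Longrightarrow> \<exists>t\<in>T. le c t) \<Longrightarrow> compact_in S le c"
  unfolding compact_in_def by blast

lemma compact_in_lub_empty: "is_lub_in S le {} b \<Longrightarrow> compact_in S le b"
proof (rule compact_inI)
  assume b: "is_lub_in S le {} b"
  show "b \<in> S" by (rule is_lub_in_mem[OF b])
  fix T s assume "T \<subseteq> S" "directed_in le T"
  then obtain t where "t \<in> T" "t \<in> S" using directed_in_nonempty by blast
  then show "\<exists>t\<in>T. le b t" using is_lub_in_least[OF b] by blast
qed

lemma compact_in_finite_lub:
  assumes po: "poset_on S le" and F: "finite F" "\<forall>c\<in>F. compact_in S le c" and s: "is_lub_in S le F s"
  shows "compact_in S le s"
proof (rule compact_inI[OF is_lub_in_mem[OF s]])
  fix T u assume T: "T \<subseteq> S" "directed_in le T" "is_lub_in S le T u" "le s u"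
  have ex: "\<forall>c\<in>F. \<exists>t. t \<in> T \<and> le c t"
  proof
    fix c assume c: "c \<in> F"
    have cc: "compact_in S le c" using F(2) c by blast
    have "le c u"
      using poset_on_trans[OF po compact_in_mem[OF cc] is_lub_in_mem[OF s] is_lub_in_mem[OF T(3)]
          is_lub_in_upper[OF s c] T(4)] .
    then show "\<exists>t. t \<in> T \<and> le c t" using compact_inD[OF cc T(1-3)] by blast
  qed
  obtain g where g: "\<forall>c\<in>F. g c \<in> T \<and> le c (g c)" using bchoice[OF ex] by (elim exE) simp
  have gF: "finite (g ` F)" "g ` F \<subseteq> T" using F(1) g by auto
  obtain t where t: "t \<in> T" "\<forall>x\<in>g ` F. le x t"
    using directed_in_finite_ub[OF po T(1,2) gF] by (elim bexE) simp
  have tS: "t \<in> S" using t(1) T(1) by auto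
  have "le s t"
  proof (rule is_lub_in_least[OF s tS])
    fix c assume c: "c \<in> F"
    have cS: "c \<in> S" using F(2) c by (blast dest: compact_in_mem)
    have gc: "g c \<in> T" "le c (g c)" using g c by blast+
    have gS: "g c \<in> S" using gc(1) T(1) by blast
    have "le (g c) t" using t(2) c by blast
    then show "le c t" using poset_on_trans[OF po cS gS tS gc(2)] by blast
  qed
  then show "\<exists>t\<in>T. le s t" using t(1) by blast
qed

lemma directed_in_finite_lubs:
  assumes j: "\<And>F. finite F \<Longrightarrow> F \<subseteq> X \<Longrightarrow> is_lub_in S le F (j F)"
  shows "directed_in le (j ` {F. finite F \<and> F \<subseteq> X})"
  unfolding directed_in_def
proof (intro conjI ballI)
  show "j ` {F. finite F \<and> F \<subseteq> X} \<noteq> {}" by blast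
  have j_le: "le (j F) (j G)" if G: "finite G" "G \<subseteq> X" and FG: "F \<subseteq> G" for F G
  proof (rule is_lub_in_least[OF j is_lub_in_mem[OF j[OF G]]])
    show "finite F" "F \<subseteq> X" using finite_subset[OF FG G(1)] FG G(2) by auto
    show "le t (j G)" if "t \<in> F" for t using is_lub_in_upper[OF j[OF G]] that FG by blast
  qed
  fix x y assume "x \<in> j ` {F. finite F \<and> F \<subseteq> X}" "y \<in> j ` {F. finite F \<and> F \<subseteq> X}"
  then obtain F G where FG: "finite F" "F \<subseteq> X" "finite G" "G \<subseteq> X" "x = j F" "y = j G" by blast
  have U: "finite (F \<union> G)" "F \<union> G \<subseteq> X" using FG by auto
  then have "j (F \<union> G) \<in> j ` {F. finite F \<and> F \<subseteq> X}" by blast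
  moreover have "le x (j (F \<union> G))" "le y (j (F \<union> G))" using j_le[OF U] FG(5,6) by auto
  ultimately show "\<exists>z\<in>j ` {F. finite F \<and> F \<subseteq> X}. le x z \<and> le y z" by blast
qed

lemma is_lub_in_finite_lubs:
  assumes po: "poset_on S le" and X: "X \<subseteq> S" "is_lub_in S le X f"
    and j: "\<And>F. finite F \<Longrightarrow> F \<subseteq> X \<Longrightarrow> is_lub_in S le F (j F)"
  shows "is_lub_in S le (j ` {F. finite F \<and> F \<subseteq> X}) f"
proof (rule is_lub_inI[OF is_lub_in_mem[OF X(2)]])
  fix z assume "z \<in> j ` {F. finite F \<and> F \<subseteq> X}"
  then obtain F where F: "finite F" "F \<subseteq> X" "z = j F" by blast
  have "le t f" if "t \<in> F" for t using is_lub_in_upper[OF X(2)] that F(2) by blast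
  then show "le z f" using is_lub_in_least[OF j[OF F(1,2)] is_lub_in_mem[OF X(2)]] F(3) by blast
next
  fix u assume u: "u \<in> S" "\<forall>z\<in>j ` {F. finite F \<and> F \<subseteq> X}. le z u"
  have "le x u" if x: "x \<in> X" for x
  proof -
    have jx: "is_lub_in S le {x} (j {x})" using j x by simp
    have "le (j {x}) u" using u(2) x by blast
    then show ?thesis
      using poset_on_trans[OF po _ is_lub_in_mem[OF jx] u(1) is_lub_in_upper[OF jx]] x X(1) by blast
  qed
  then show "le f u" using is_lub_in_least[OF X(2) u(1)] by blast
qed

lemma compact_in_finite_lub_of_subset:
  assumes po: "poset_on S le" and fc: "compact_in S le f" and X: "X \<subseteq> S" "is_lub_in S le X f"
    and j: "\<And>F. finite F \<Longrightarrow> F \<subseteq> X \<Longrightarrow> is_lub_in S le F (j F)"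
  shows "\<exists>F. finite F \<and> F \<subseteq> X \<and> f = j F"
proof -
  have f: "f \<in> S" by (rule compact_in_mem[OF fc])
  have lub: "is_lub_in S le (j ` {F. finite F \<and> F \<subseteq> X}) f" by (rule is_lub_in_finite_lubs[OF po X j])
  have sub: "j ` {F. finite F \<and> F \<subseteq> X} \<subseteq> S" by (auto intro: is_lub_in_mem[OF j])
  obtain F where F: "finite F" "F \<subseteq> X" "le f (j F)"
    using compact_inD[OF fc sub directed_in_finite_lubs[OF j] lub poset_on_refl[OF po f]] by blast
  have "j F \<in> j ` {F. finite F \<and> F \<subseteq> X}" using F(1,2) by blast
  then have "f = j F"
    using poset_on_antisym[OF po f is_lub_in_mem[OF j[OF F(1,2)]] F(3) is_lub_in_upper[OF lub]] by blast
  then show ?thesis using F(1,2) by blast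
qed

text \<open>The projection of an embedding-projection pair is also required to preserve all existing
  least upper bounds.\<close>

definition ep_pair :: "'b set \<Rightarrow> ('b \<Rightarrow> 'b \<Rightarrow> bool) \<Rightarrow> 'c set \<Rightarrow> ('c \<Rightarrow> 'c \<Rightarrow> bool)
    \<Rightarrow> ('b \<Rightarrow> 'c) \<Rightarrow> ('c \<Rightarrow> 'b) \<Rightarrow> bool" where
  "ep_pair S0 le0 S1 le1 e p \<longleftrightarrow> (\<forall>x\<in>S0. e x \<in> S1) \<and> (\<forall>y\<in>S1. p y \<in> S0)
     \<and> (\<forall>x\<in>S0. \<forall>y\<in>S0. le0 x y \<longrightarrow> le1 (e x) (e y)) \<and> (\<forall>x\<in>S1. \<forall>y\<in>S1. le1 x y \<longrightarrow> le0 (p x) (p y))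
     \<and> (\<forall>x\<in>S0. p (e x) = x) \<and> (\<forall>y\<in>S1. le1 (e (p y)) y)
     \<and> (\<forall>A s. A \<subseteq> S1 \<longrightarrow> is_lub_in S1 le1 A s \<longrightarrow> is_lub_in S0 le0 (p ` A) (p s))"

lemma ep_pairI:
  assumes "\<And>x. x \<in> S0 \<Longrightarrow> e x \<in> S1" "\<And>y. y \<in> S1 \<Longrightarrow> p y \<in> S0"
    "\<And>x y. x \<in> S0 \<Longrightarrow> y \<in> S0 \<Longrightarrow> le0 x y \<Longrightarrow> le1 (e x) (e y)"
    "\<And>x y. x \<in> S1 \<Longrightarrow> y \<in> S1 \<Longrightarrow> le1 x y \<Longrightarrow> le0 (p x) (p y)"
    "\<And>x. x \<in> S0 \<Longrightarrow> p (e x) = x" "\<And>y. y \<in> S1 \<Longrightarrow> le1 (e (p y)) y"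
    "\<And>A s. A \<subseteq> S1 \<Longrightarrow> is_lub_in S1 le1 A s \<Longrightarrow> is_lub_in S0 le0 (p ` A) (p s)"
  shows "ep_pair S0 le0 S1 le1 e p"
  unfolding ep_pair_def using assms by simp

context
  fixes S0 le0 S1 le1 e p
  assumes ep: "ep_pair S0 le0 S1 le1 e p"
begin

lemma ep_pair_emb_in: "x \<in> S0 \<Longrightarrow> e x \<in> S1"
  using ep by (simp add: ep_pair_def)

lemma ep_pair_proj_in: "y \<in> S1 \<Longrightarrow> p y \<in> S0"
  using ep by (simp add: ep_pair_def)

lemma ep_pair_emb_mono: "x \<in> S0 \<Longrightarrow> y \<in> S0 \<Longrightarrow> le0 x y \<Longrightarrow> le1 (e x) (e y)"
  using ep by (simp add: ep_pair_def)

lemma ep_pair_proj_mono: "x \<in> S1 \<Longrightarrow> y \<in> S1 \<Longrightarrow> le1 x y \<Longrightarrow> le0 (p x) (p y)"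
  using ep by (simp add: ep_pair_def)

lemma ep_pair_proj_emb: "x \<in> S0 \<Longrightarrow> p (e x) = x"
  using ep by (simp add: ep_pair_def)

lemma ep_pair_emb_proj_le: "y \<in> S1 \<Longrightarrow> le1 (e (p y)) y"
  using ep by (simp add: ep_pair_def)

lemma ep_pair_proj_lub: "A \<subseteq> S1 \<Longrightarrow> is_lub_in S1 le1 A s \<Longrightarrow> is_lub_in S0 le0 (p ` A) (p s)"
  using ep by (simp add: ep_pair_def)

lemma ep_pair_adjoint:
  assumes po: "poset_on S1 le1" and x: "x \<in> S0" and y: "y \<in> S1"
  shows "le1 (e x) y \<longleftrightarrow> le0 x (p y)"
proof
  assume "le1 (e x) y"
  then show "le0 x (p y)" using ep_pair_proj_mono[OF ep_pair_emb_in[OF x] y] ep_pair_proj_emb[OF x]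
    by simp
next
  assume "le0 x (p y)"
  then have "le1 (e x) (e (p y))" using ep_pair_emb_mono[OF x ep_pair_proj_in[OF y]] by simp
  then show "le1 (e x) y"
    using poset_on_trans[OF po ep_pair_emb_in[OF x] ep_pair_emb_in[OF ep_pair_proj_in[OF y]] y]
      ep_pair_emb_proj_le[OF y] by simp
qed

lemma ep_pair_emb_compact:
  assumes po: "poset_on S1 le1" and c: "compact_in S0 le0 c"
  shows "compact_in S1 le1 (e c)"
proof (rule compact_inI)
  have cS: "c \<in> S0" by (rule compact_in_mem[OF c])
  then show "e c \<in> S1" by (rule ep_pair_emb_in)
  fix T s assume T: "T \<subseteq> S1" "directed_in le1 T" "is_lub_in S1 le1 T s" "le1 (e c) s"
  have pT: "p ` T \<subseteq> S0" using ep_pair_proj_in T(1) by blast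
  have dir: "directed_in le0 (p ` T)"
    by (rule directed_in_image[OF T(2)]) (use ep_pair_proj_mono T(1) in blast)
  have "le0 c (p s)" using ep_pair_adjoint[OF po cS is_lub_in_mem[OF T(3)]] T(4) by simp
  then obtain t where t: "t \<in> T" "le0 c (p t)"
    using compact_inD[OF c pT dir ep_pair_proj_lub[OF T(1,3)]] by blast
  then have "le1 (e c) t" using ep_pair_adjoint[OF po cS] T(1) by blast
  then show "\<exists>t\<in>T. le1 (e c) t" using t(1) by blast
qed

end

lemma compact_in_reflect:
  assumes x: "x \<in> S0" and c: "compact_in S le (g x)"
    and mono: "\<And>y z. y \<in> S0 \<Longrightarrow> z \<in> S0 \<Longrightarrow> le0 y z \<Longrightarrow> le (g y) (g z)"
    and reflect: "\<And>z. z \<in> S0 \<Longrightarrow> le (g x) (g z) \<Longrightarrow> le0 x z"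
    and into: "\<And>y. y \<in> S0 \<Longrightarrow> g y \<in> S"
    and lub: "\<And>T s. T \<subseteq> S0 \<Longrightarrow> directed_in le0 T \<Longrightarrow> is_lub_in S0 le0 T s \<Longrightarrow> is_lub_in S le (g ` T) (g s)"
  shows "compact_in S0 le0 x"
proof (rule compact_inI[OF x])
  fix T s assume T: "T \<subseteq> S0" "directed_in le0 T" "is_lub_in S0 le0 T s" "le0 x s"
  have "g ` T \<subseteq> S" using into T(1) by blast
  moreover have "directed_in le (g ` T)" by (rule directed_in_image[OF T(2)]) (use mono T(1) in blast)
  moreover have "le (g x) (g s)" using mono[OF x is_lub_in_mem[OF T(3)] T(4)] .
  ultimately obtain t where "t \<in> T" "le (g x) (g t)" using compact_inD[OF c _ _ lub[OF T(1-3)]] by blast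
  then show "\<exists>t\<in>T. le0 x t" using reflect T(1) by blast
qed

lemma order_isoI:
  assumes AB: "\<And>f. f \<in> A \<Longrightarrow> \<phi> f \<in> B" and BA: "\<And>x. x \<in> B \<Longrightarrow> \<psi> x \<in> A"
    and inv1: "\<And>f. f \<in> A \<Longrightarrow> \<psi> (\<phi> f) = f" and inv2: "\<And>x. x \<in> B \<Longrightarrow> \<phi> (\<psi> x) = x"
    and mono1: "\<And>f g. f \<in> A \<Longrightarrow> g \<in> A \<Longrightarrow> f \<subseteq> g \<Longrightarrow> leB (\<phi> f) (\<phi> g)"
    and mono2: "\<And>x y. x \<in> B \<Longrightarrow> y \<in> B \<Longrightarrow> leB x y \<Longrightarrow> \<psi> x \<subseteq> \<psi> y"
  shows "order_iso A (\<subseteq>) B leB"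
  unfolding order_iso_def
proof (intro exI conjI ballI)
  show "bij_betw \<phi> A B"
    by (rule bij_betw_byWitness[where f'=\<psi>]) (auto simp: inv1 inv2 AB BA)
  show "f \<subseteq> g \<longleftrightarrow> leB (\<phi> f) (\<phi> g)" if "f \<in> A" "g \<in> A" for f g
    using mono1[OF that] mono2[OF AB AB, OF that] inv1 that by metis
qed

lemma filtersD:
  assumes "f \<in> filters L le"
  shows "f \<subseteq> L" "Om \<in> f" "\<And>s t. s \<in> f \<Longrightarrow> t \<in> L \<Longrightarrow> le s t \<Longrightarrow> t \<in> f"
    "\<And>s t. s \<in> f \<Longrightarrow> t \<in> f \<Longrightarrow> Conj s t \<in> f"
  using assms unfolding filters_def by blast+

lemma filters_directed:
  assumes f: "f \<in> filters L le" and conj: "\<And>s t. s \<in> L \<Longrightarrow> t \<in> L \<Longrightarrow> le (Conj s t) s \<and> le (Conj s t) t"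
  shows "directed_in (\<lambda>s t. le t s) f"
  unfolding directed_in_def
proof (intro conjI ballI)
  show "f \<noteq> {}" using filtersD(2)[OF f] by blast
  fix s t assume "s \<in> f" "t \<in> f"
  moreover have "s \<in> L" "t \<in> L" using calculation filtersD(1)[OF f] by blast+
  ultimately show "\<exists>z\<in>f. le z s \<and> le z t" using filtersD(4)[OF f] conj by blast
qed

section \<open>The lattice R and its type theory\<close>

lemma poset_on_UNIV: "poset_on (UNIV::'a::order set) (\<le>)"
  unfolding poset_on_def by auto

lemma is_lub_in_UNIV_iff: "is_lub_in UNIV (\<le>) T (s :: 'a::complete_lattice) \<longleftrightarrow> s = Sup T"
  unfolding is_lub_in_def by (auto intro: Sup_upper Sup_least antisym)

lemma compactR_directedD:
  "compactR (a::'a::complete_lattice) \<Longrightarrow> directed_in (\<le>) T \<Longrightarrow> a \<le> Sup T \<Longrightarrow> \<exists>t\<in>T. a \<le> t"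
  using compact_inD[of UNIV "(\<le>)" a T "Sup T"] is_lub_in_UNIV_iff by blast

lemma compactR_bot: "compactR (bot::'a::complete_lattice)"
  by (rule compact_in_lub_empty) (simp add: is_lub_in_UNIV_iff)

lemma compactR_sup: "compactR (a::'a::complete_lattice) \<Longrightarrow> compactR b \<Longrightarrow> compactR (sup a b)"
  using compact_in_finite_lub[OF poset_on_UNIV, of "{a, b}" "sup a b"] by (simp add: is_lub_in_UNIV_iff)

fun valR :: "('a::complete_lattice) ty \<Rightarrow> 'a" where
  "valR (Psi a) = a"
| "valR Om = bot"
| "valR (Conj s t) = sup (valR s) (valR t)"
| "valR (Arr _ _) = bot"
| "valR (Times _ _) = bot"

lemma valR_compact: "isR t \<Longrightarrow> compactR (valR t)"
  by (induction t) (auto simp: compactR_bot compactR_sup)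

lemma leR_isR: "leR s t \<Longrightarrow> isR s \<and> isR t"
  by (induction rule: leR.induct) (auto simp: compactR_bot compactR_sup)

lemma leR_valR: "leR s t \<Longrightarrow> valR t \<le> valR s"
proof (induction rule: leR.induct)
  case (R_trans s t u) then show ?case by (blast intro: order_trans)
qed (auto intro: le_supI1 le_supI2)

lemma leR_Psi_antimono:
  assumes a: "compactR (a::'a::complete_lattice)" and b: "compactR b" and ba: "b \<le> a"
  shows "leR (Psi a) (Psi b)"
proof -
  have "leR (Psi a) (Conj (Psi a) (Psi b))" using R_join1[OF a b] ba by (simp add: sup_absorb1)
  moreover have "leR (Conj (Psi a) (Psi b)) (Psi b)" using R_conjR[of "Psi a" "Psi b"] a b by simp
  ultimately show ?thesis by (rule R_trans)
qed

lemma leR_Psi_valR: "isR t \<Longrightarrow> leR t (Psi (valR t)) \<and> leR (Psi (valR t)) t"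
proof (induction t)
  case (Psi a) then show ?case using R_refl[of "Psi a"] by simp
next
  case Om then show ?case using R_bot1 R_bot2 by simp
next
  case (Conj s t)
  have st: "isR s" "isR t" and c: "compactR (valR s)" "compactR (valR t)"
    using Conj.prems valR_compact by auto
  have ps: "isR (Psi (valR s))" "isR (Psi (valR t))" using c by auto
  have IH: "leR s (Psi (valR s))" "leR (Psi (valR s)) s" "leR t (Psi (valR t))" "leR (Psi (valR t)) t"
    using Conj.IH st by auto
  have "leR (Conj s t) (Conj (Psi (valR s)) (Psi (valR t)))"
    by (rule R_glb[OF R_trans[OF R_conjL[OF st] IH(1)] R_trans[OF R_conjR[OF st] IH(3)]])
  then have 1: "leR (Conj s t) (Psi (valR (Conj s t)))" using R_trans[OF _ R_join2[OF c]] by simp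
  have "leR (Conj (Psi (valR s)) (Psi (valR t))) (Conj s t)"
    by (rule R_glb[OF R_trans[OF R_conjL[OF ps] IH(2)] R_trans[OF R_conjR[OF ps] IH(4)]])
  then have 2: "leR (Psi (valR (Conj s t))) (Conj s t)" using R_trans[OF R_join1[OF c]] by simp
  show ?case using 1 2 ..
qed auto

lemma leR_iff_valR:
  assumes "isR s" "isR t" shows "leR s t \<longleftrightarrow> valR t \<le> valR s"
proof
  assume "valR t \<le> valR s"
  then have "leR (Psi (valR s)) (Psi (valR t))" using leR_Psi_antimono valR_compact assms by blast
  then show "leR s t" using R_trans leR_Psi_valR assms by meson
qed (rule leR_valR)

definition filter_supR :: "('a::complete_lattice) ty set \<Rightarrow> 'a" where
  "filter_supR f = Sup (valR ` f)"

definition filterR :: "('a::complete_lattice) \<Rightarrow> 'a ty set" where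
  "filterR x = {t. isR t \<and> valR t \<le> x}"

lemma filterR_filter: "filterR x \<in> filters {t. isR t} leR"
  unfolding filters_def filterR_def using leR_valR order_trans by fastforce

lemma filterR_filter_supR:
  assumes f: "f \<in> filters {t. isR t} leR"
  shows "filterR (filter_supR f) = f"
proof
  show "f \<subseteq> filterR (filter_supR f)"
    using filtersD(1)[OF f] unfolding filterR_def filter_supR_def by (auto intro: Sup_upper)
  show "filterR (filter_supR f) \<subseteq> f"
  proof
    fix t assume "t \<in> filterR (filter_supR f)"
    then have t: "isR t" "valR t \<le> Sup (valR ` f)" unfolding filterR_def filter_supR_def by auto
    have "directed_in (\<lambda>s t. leR t s) f"
      by (rule filters_directed[OF f]) (simp add: R_conjL R_conjR)
    then have "directed_in (\<le>) (valR ` f)"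
      by (rule directed_in_image) (rule leR_valR)
    then obtain s where s: "s \<in> f" "valR t \<le> valR s"
      using compactR_directedD[OF valR_compact[OF t(1)] _ t(2)] by blast
    have "isR s" using s(1) filtersD(1)[OF f] by blast
    then have "leR s t" using leR_iff_valR[OF _ t(1)] s(2) by blast
    then show "t \<in> f" using filtersD(3)[OF f s(1)] t(1) by simp
  qed
qed

lemma filter_supR_filterR:
  assumes algebraic: "\<forall>x::'a::complete_lattice. x = Sup {c. compactR c \<and> c \<le> x}"
  shows "filter_supR (filterR (x::'a)) = x"
proof (rule antisym)
  show "filter_supR (filterR x) \<le> x" unfolding filter_supR_def filterR_def by (auto intro: Sup_least)
  have "{c. compactR c \<and> c \<le> x} \<subseteq> valR ` filterR x"
    unfolding filterR_def by (auto intro: image_eqI[of _ _ "Psi c" for c])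
  then show "x \<le> filter_supR (filterR x)"
    unfolding filter_supR_def using algebraic Sup_subset_mono by metis
qed

lemma order_iso_filters_R:
  assumes algebraic: "\<forall>x::'a::complete_lattice. x = Sup {c. compactR c \<and> c \<le> x}"
  shows "order_iso (filters {t::'a ty. isR t} leR) (\<subseteq>) (UNIV :: 'a set) (\<le>)"
proof (rule order_isoI[where \<phi>=filter_supR and \<psi>=filterR])
  show "\<And>f g. f \<subseteq> g \<Longrightarrow> filter_supR f \<le> filter_supR g"
    unfolding filter_supR_def by (simp add: Sup_subset_mono image_mono)
  show "\<And>x y. x \<le> y \<Longrightarrow> filterR x \<subseteq> filterR y" unfolding filterR_def by auto
qed (auto simp: filterR_filter filterR_filter_supR filter_supR_filterR[OF algebraic])

section \<open>Function spaces over an \<open>\<omega>\<close>-algebraic level\<close>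

abbreviation omega_algebraic_level :: "'b set \<times> ('b \<Rightarrow> 'b \<Rightarrow> bool) \<Rightarrow> bool" where
  "omega_algebraic_level L \<equiv> omega_algebraic_on (fst L) (snd L)"

lemma KC_nonempty: "omega_algebraic_level L \<Longrightarrow> KC L \<noteq> {}"
proof -
  assume "omega_algebraic_level L"
  then obtain b where "is_lub_in (fst L) (snd L) {} b" using omega_algebraic_on_ex_lub by blast
  then have "b \<in> KC L" unfolding KC_def by (simp add: compact_in_lub_empty)
  then show ?thesis by blast
qed

lemma KC_in: "c \<in> KC L \<Longrightarrow> c \<in> fst L"
  unfolding KC_def by (rule compact_in_mem) simp

lemma KC_countable: "omega_algebraic_level L \<Longrightarrow> countable (KC L)"
  unfolding KC_def using omega_algebraic_on_countable by blast

lemma enum_KC: "omega_algebraic_level L \<Longrightarrow> enum L i \<in> KC L"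
  unfolding enum_def by (rule from_nat_into[OF KC_nonempty])

lemma enum_in: "omega_algebraic_level L \<Longrightarrow> enum L i \<in> fst L"
  by (rule KC_in[OF enum_KC])

lemma enum_surj: "omega_algebraic_level L \<Longrightarrow> c \<in> KC L \<Longrightarrow> \<exists>i. enum L i = c"
  unfolding enum_def using from_nat_into_surj[OF KC_countable] by blast

lemma D_of_mono: "f \<in> D_of L \<Longrightarrow> snd L (enum L i) (enum L j) \<Longrightarrow> unF f i \<le> unF f j"
  unfolding D_of_def by auto

lemma UFun_in_D_of: "UFun g \<in> D_of L \<longleftrightarrow> (\<forall>i j. snd L (enum L i) (enum L j) \<longrightarrow> g i \<le> g j)"
  unfolding D_of_def by auto

lemma D_of_eqI: "f \<in> D_of L \<Longrightarrow> g \<in> D_of L \<Longrightarrow> (\<And>i. unF f i = unF g i) \<Longrightarrow> f = g"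
  unfolding D_of_def by auto

definition supF :: "('a::complete_lattice) U set \<Rightarrow> 'a U" where
  "supF A = UFun (\<lambda>i. SUP f\<in>A. unF f i)"

lemma unF_supF[simp]: "unF (supF A) i = (SUP f\<in>A. unF f i)"
  unfolding supF_def by simp

lemma supF_in: "A \<subseteq> D_of L \<Longrightarrow> supF A \<in> D_of L"
  unfolding supF_def UFun_in_D_of by (auto intro!: SUP_mono dest: D_of_mono)

lemma poset_on_D_of: "poset_on (D_of L) (leD_of L)"
  unfolding poset_on_def leD_of_def
proof (intro conjI ballI impI)
  fix x y assume xy: "x \<in> D_of L" "y \<in> D_of L" "\<forall>i. unF x i \<le> unF y i" "\<forall>i. unF y i \<le> unF x i"
  show "x = y" by (rule D_of_eqI[OF xy(1,2)]) (use xy(3,4) antisym in blast)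
qed (auto intro: order_trans)

lemma is_lub_in_supF: "A \<subseteq> D_of L \<Longrightarrow> is_lub_in (D_of L) (leD_of L) A (supF A)"
  by (rule is_lub_inI) (auto simp: supF_in leD_of_def intro: SUP_upper SUP_least)

lemma is_lub_in_D_of_iff: "A \<subseteq> D_of L \<Longrightarrow> is_lub_in (D_of L) (leD_of L) A s \<longleftrightarrow> s = supF A"
  using is_lub_in_unique[OF poset_on_D_of] is_lub_in_supF by blast

lemma appD_enum:
  assumes L: "omega_algebraic_level L" and f: "f \<in> D_of L"
  shows "appD L f (enum L i) = unF f i"
  unfolding appD_def
proof (rule antisym)
  show "(SUP j\<in>{j. snd L (enum L j) (enum L i)}. unF f j) \<le> unF f i"
    using D_of_mono[OF f] by (auto intro: SUP_least)
  have "snd L (enum L i) (enum L i)"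
    using poset_on_refl[OF omega_algebraic_on_poset[OF L] enum_in[OF L]] .
  then show "unF f i \<le> (SUP j\<in>{j. snd L (enum L j) (enum L i)}. unF f j)" by (auto intro: SUP_upper)
qed

lemma appD_mono:
  assumes L: "omega_algebraic_level L" and "x \<in> fst L" "y \<in> fst L" "snd L x y"
  shows "appD L f x \<le> appD L f y"
  unfolding appD_def
  by (rule SUP_subset_mono)
     (use poset_on_trans[OF omega_algebraic_on_poset[OF L] enum_in[OF L]] assms in blast, simp)

lemma appD_mono_fun: "leD_of L f g \<Longrightarrow> appD L f x \<le> appD L g x"
  unfolding appD_def leD_of_def by (intro SUP_mono) auto

lemma appD_supF: "appD L (supF A) x = (SUP f\<in>A. appD L f x)"
  unfolding appD_def unF_supF by (rule SUP_commute)

definition step_fun :: "('a::complete_lattice) level \<Rightarrow> 'a U \<Rightarrow> 'a \<Rightarrow> 'a U" where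
  "step_fun L k a = UFun (\<lambda>i. if snd L k (enum L i) then a else bot)"

lemma unF_step_fun[simp]: "unF (step_fun L k a) i = (if snd L k (enum L i) then a else bot)"
  unfolding step_fun_def by simp

lemma step_fun_in:
  assumes L: "omega_algebraic_level L" and k: "k \<in> fst L" shows "step_fun L k a \<in> D_of L"
  unfolding step_fun_def UFun_in_D_of
  using poset_on_trans[OF omega_algebraic_on_poset[OF L] k enum_in[OF L] enum_in[OF L]] by auto

lemma step_fun_le_iff:
  assumes L: "omega_algebraic_level L" and f: "f \<in> D_of L" and i: "enum L i = k"
  shows "leD_of L (step_fun L k a) f \<longleftrightarrow> a \<le> unF f i"
proof
  assume "leD_of L (step_fun L k a) f"
  moreover have "snd L k (enum L i)"
    using i poset_on_refl[OF omega_algebraic_on_poset[OF L] enum_in[OF L, of i]] by simp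
  ultimately show "a \<le> unF f i" unfolding leD_of_def by (metis unF_step_fun)
next
  assume "a \<le> unF f i"
  then show "leD_of L (step_fun L k a) f"
    unfolding leD_of_def using D_of_mono[OF f, of i] i by (auto intro: order_trans)
qed

lemma step_fun_compact:
  assumes L: "omega_algebraic_level L" and k: "k \<in> KC L" and a: "compactR a"
  shows "compact_in (D_of L) (leD_of L) (step_fun L k a)"
proof (rule compact_inI)
  show "step_fun L k a \<in> D_of L" by (rule step_fun_in[OF L KC_in[OF k]])
  fix T s assume T: "T \<subseteq> D_of L" "directed_in (leD_of L) T" "is_lub_in (D_of L) (leD_of L) T s"
    "leD_of L (step_fun L k a) s"
  obtain i where i: "enum L i = k" using enum_surj[OF L k] by blast
  have "a \<le> Sup ((\<lambda>t. unF t i) ` T)"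
    using step_fun_le_iff[OF L is_lub_in_mem[OF T(3)] i] T(4) is_lub_in_D_of_iff[OF T(1)] T(3) by simp
  moreover have "directed_in (\<le>) ((\<lambda>t. unF t i) ` T)"
    by (rule directed_in_image[OF T(2)]) (simp add: leD_of_def)
  ultimately obtain t where "t \<in> T" "a \<le> unF t i" using compactR_directedD[OF a] by blast
  then show "\<exists>t\<in>T. leD_of L (step_fun L k a) t" using step_fun_le_iff[OF L _ i] T(1) by blast
qed

definition steps_below :: "('a::complete_lattice) level \<Rightarrow> 'a U \<Rightarrow> 'a U set" where
  "steps_below L f = {step_fun L k a | k a. k \<in> KC L \<and> compactR a \<and> leD_of L (step_fun L k a) f}"

lemma steps_below_subset: "omega_algebraic_level L \<Longrightarrow> steps_below L f \<subseteq> D_of L"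
  unfolding steps_below_def using step_fun_in[OF _ KC_in] by blast

section \<open>Products\<close>

fun fstU :: "'a U \<Rightarrow> 'a U" where "fstU (UPair d c) = d" | "fstU _ = UUnit"
fun sndU :: "'a U \<Rightarrow> 'a U" where "sndU (UPair d c) = c" | "sndU _ = UUnit"

definition prodS :: "'a U set \<Rightarrow> 'a U set \<Rightarrow> 'a U set" where
  "prodS S1 S2 = {UPair d c | d c. d \<in> S1 \<and> c \<in> S2}"

definition prodLe :: "('a U \<Rightarrow> 'a U \<Rightarrow> bool) \<Rightarrow> ('a U \<Rightarrow> 'a U \<Rightarrow> bool) \<Rightarrow> 'a U \<Rightarrow> 'a U \<Rightarrow> bool" where
  "prodLe le1 le2 x y = (case (x, y) of (UPair d c, UPair d' c') \<Rightarrow> le1 d d' \<and> le2 c c' | _ \<Rightarrow> False)"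

lemma lev_Suc: "lev (Suc n) = (prodS (D_of (lev n)) (fst (lev n)), prodLe (leD_of (lev n)) (snd (lev n)))"
  unfolding prodS_def prodLe_def by simp

declare lev.simps(2)[simp del]

lemma prodLe_UPair[simp]: "prodLe le1 le2 (UPair d c) (UPair d' c') \<longleftrightarrow> le1 d d' \<and> le2 c c'"
  unfolding prodLe_def by simp

lemma UPair_in_prodS[simp]: "UPair d c \<in> prodS S1 S2 \<longleftrightarrow> d \<in> S1 \<and> c \<in> S2"
  unfolding prodS_def by simp

lemma prodS_cases: "x \<in> prodS S1 S2 \<Longrightarrow> x = UPair (fstU x) (sndU x) \<and> fstU x \<in> S1 \<and> sndU x \<in> S2"
  unfolding prodS_def by auto

lemma prodS_E:
  assumes "x \<in> prodS S1 S2" obtains d c where "x = UPair d c" "d \<in> S1" "c \<in> S2"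
  using assms unfolding prodS_def by blast

lemma prodLe_iff: "x \<in> prodS S1 S2 \<Longrightarrow> y \<in> prodS S1 S2 \<Longrightarrow>
   prodLe le1 le2 x y \<longleftrightarrow> le1 (fstU x) (fstU y) \<and> le2 (sndU x) (sndU y)"
  unfolding prodS_def by auto

lemma poset_on_prod:
  assumes p1: "poset_on S1 le1" and p2: "poset_on S2 le2" shows "poset_on (prodS S1 S2) (prodLe le1 le2)"
  unfolding poset_on_def
proof (intro conjI ballI impI)
  fix x assume "x \<in> prodS S1 S2"
  then show "prodLe le1 le2 x x"
    using prodS_cases[of x] poset_on_refl[OF p1] poset_on_refl[OF p2] prodLe_iff by metis
next
  fix x y assume xy: "x \<in> prodS S1 S2" "y \<in> prodS S1 S2" "prodLe le1 le2 x y" "prodLe le1 le2 y x"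
  have "fstU x = fstU y" "sndU x = sndU y"
    using poset_on_antisym[OF p1] poset_on_antisym[OF p2] prodLe_iff[OF xy(1,2)] prodLe_iff[OF xy(2,1)]
      prodS_cases[OF xy(1)] prodS_cases[OF xy(2)] xy(3,4) by metis+
  then show "x = y" using prodS_cases[OF xy(1)] prodS_cases[OF xy(2)] by metis
next
  fix x y z assume xyz: "x \<in> prodS S1 S2" "y \<in> prodS S1 S2" "z \<in> prodS S1 S2"
    "prodLe le1 le2 x y" "prodLe le1 le2 y z"
  have "le1 (fstU x) (fstU z)" "le2 (sndU x) (sndU z)"
    using poset_on_trans[OF p1] poset_on_trans[OF p2] prodLe_iff[OF xyz(1,2)] prodLe_iff[OF xyz(2,3)]
      prodS_cases[OF xyz(1)] prodS_cases[OF xyz(2)] prodS_cases[OF xyz(3)] xyz(4,5) by metis+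
  then show "prodLe le1 le2 x z" using prodLe_iff[OF xyz(1,3)] by simp
qed

lemma is_lub_in_prod:
  assumes A: "A \<subseteq> prodS S1 S2" and a: "is_lub_in S1 le1 (fstU ` A) a" and b: "is_lub_in S2 le2 (sndU ` A) b"
  shows "is_lub_in (prodS S1 S2) (prodLe le1 le2) A (UPair a b)"
proof (rule is_lub_inI)
  show "UPair a b \<in> prodS S1 S2" using is_lub_in_mem[OF a] is_lub_in_mem[OF b] by simp
next
  fix t assume t: "t \<in> A"
  have tS: "t \<in> prodS S1 S2" using t A by blast
  have "le1 (fstU t) a" "le2 (sndU t) b" using is_lub_in_upper[OF a] is_lub_in_upper[OF b] t by simp_all
  then show "prodLe le1 le2 t (UPair a b)" using prodS_cases[OF tS] prodLe_UPair by metis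
next
  fix u assume u: "u \<in> prodS S1 S2" "\<forall>t\<in>A. prodLe le1 le2 t u"
  have uu: "u = UPair (fstU u) (sndU u)" "fstU u \<in> S1" "sndU u \<in> S2" using prodS_cases[OF u(1)] by auto
  have below: "le1 (fstU x) (fstU u) \<and> le2 (sndU x) (sndU u)" if "x \<in> A" for x
    using u(2) prodLe_iff[OF _ u(1)] A that by blast
  have "le1 a (fstU u)" by (rule is_lub_in_least[OF a uu(2)]) (use below in blast)
  moreover have "le2 b (sndU u)" by (rule is_lub_in_least[OF b uu(3)]) (use below in blast)
  ultimately show "prodLe le1 le2 (UPair a b) u" using uu(1) prodLe_UPair by metis
qed

lemma is_lub_in_prod_components:
  assumes A: "A \<subseteq> prodS S1 S2" and s: "is_lub_in (prodS S1 S2) (prodLe le1 le2) A s"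
  shows "is_lub_in S1 le1 (fstU ` A) (fstU s)" "is_lub_in S2 le2 (sndU ` A) (sndU s)"
proof -
  have sS: "s \<in> prodS S1 S2" by (rule is_lub_in_mem[OF s])
  have ss: "s = UPair (fstU s) (sndU s)" "fstU s \<in> S1" "sndU s \<in> S2" using prodS_cases[OF sS] by auto
  have up: "le1 (fstU t) (fstU s) \<and> le2 (sndU t) (sndU s)" if "t \<in> A" for t
    using is_lub_in_upper[OF s that] prodLe_iff[OF _ sS] A that by blast
  have le_UPair: "prodLe le1 le2 t (UPair u v)" if "t \<in> A" "le1 (fstU t) u" "le2 (sndU t) v" for t u v
  proof -
    have "t = UPair (fstU t) (sndU t)" using prodS_cases A that(1) by blast
    then show ?thesis using that(2,3) prodLe_UPair by metis
  qed
  show "is_lub_in S1 le1 (fstU ` A) (fstU s)"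
  proof (rule is_lub_inI[OF ss(2)])
    fix t assume "t \<in> fstU ` A" then show "le1 t (fstU s)" using up by blast
  next
    fix u assume u: "u \<in> S1" "\<forall>t\<in>fstU ` A. le1 t u"
    have "\<forall>t\<in>A. prodLe le1 le2 t (UPair u (sndU s))" using le_UPair u(2) up by blast
    then have "prodLe le1 le2 s (UPair u (sndU s))" using is_lub_in_least[OF s] u(1) ss(3) by simp
    then show "le1 (fstU s) u" using ss(1) prodLe_UPair by metis
  qed
  show "is_lub_in S2 le2 (sndU ` A) (sndU s)"
  proof (rule is_lub_inI[OF ss(3)])
    fix t assume "t \<in> sndU ` A" then show "le2 t (sndU s)" using up by blast
  next
    fix u assume u: "u \<in> S2" "\<forall>t\<in>sndU ` A. le2 t u"
    have "\<forall>t\<in>A. prodLe le1 le2 t (UPair (fstU s) u)" using le_UPair u(2) up by blast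
    then have "prodLe le1 le2 s (UPair (fstU s) u)" using is_lub_in_least[OF s] u(1) ss(2) by simp
    then show "le2 (sndU s) u" using ss(1) prodLe_UPair by metis
  qed
qed

lemma compact_prod_components:
  assumes p1: "poset_on S1 le1" and p2: "poset_on S2 le2" and d: "d \<in> S1" and c: "c \<in> S2"
    and dc: "compact_in (prodS S1 S2) (prodLe le1 le2) (UPair d c)"
  shows "compact_in S1 le1 d" "compact_in S2 le2 c"
proof -
  have "is_lub_in (prodS S1 S2) (prodLe le1 le2) ((\<lambda>t. UPair t c) ` T) (UPair s c)"
    if "T \<subseteq> S1" "directed_in le1 T" "is_lub_in S1 le1 T s" for T s
  proof (rule is_lub_in_prod)
    have "T \<noteq> {}" using directed_in_nonempty[OF that(2)] .
    then show "is_lub_in S2 le2 (sndU ` (\<lambda>t. UPair t c) ` T) c"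
      using is_lub_in_singleton[OF p2 c] by (simp add: image_image image_constant_conv)
  qed (use that c in \<open>auto simp: image_image\<close>)
  then show "compact_in S1 le1 d"
    by (intro compact_in_reflect[where g="\<lambda>t. UPair t c", OF d dc]) (use c poset_on_refl[OF p2 c] in auto)
  have "is_lub_in (prodS S1 S2) (prodLe le1 le2) ((\<lambda>t. UPair d t) ` T) (UPair d s)"
    if "T \<subseteq> S2" "directed_in le2 T" "is_lub_in S2 le2 T s" for T s
  proof (rule is_lub_in_prod)
    have "T \<noteq> {}" using directed_in_nonempty[OF that(2)] .
    then show "is_lub_in S1 le1 (fstU ` (\<lambda>t. UPair d t) ` T) d"
      using is_lub_in_singleton[OF p1 d] by (simp add: image_image image_constant_conv)
  qed (use that d in \<open>auto simp: image_image\<close>)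
  then show "compact_in S2 le2 c"
    by (intro compact_in_reflect[where g="\<lambda>t. UPair d t", OF c dc]) (use d poset_on_refl[OF p1 d] in auto)
qed

lemma compact_prod_UPair:
  assumes p1: "poset_on S1 le1" and p2: "poset_on S2 le2"
    and d: "compact_in S1 le1 d" and c: "compact_in S2 le2 c"
  shows "compact_in (prodS S1 S2) (prodLe le1 le2) (UPair d c)"
proof (rule compact_inI)
  show "UPair d c \<in> prodS S1 S2" using compact_in_mem[OF d] compact_in_mem[OF c] by simp
  fix T s assume T: "T \<subseteq> prodS S1 S2" "directed_in (prodLe le1 le2) T"
    "is_lub_in (prodS S1 S2) (prodLe le1 le2) T s" "prodLe le1 le2 (UPair d c) s"
  have le_T: "le1 (fstU x) (fstU y) \<and> le2 (sndU x) (sndU y)" if "x \<in> T" "y \<in> T" "prodLe le1 le2 x y" for x y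
    using prodLe_iff[of x S1 S2 y le1 le2] that T(1) by blast
  have sub: "fstU ` T \<subseteq> S1" "sndU ` T \<subseteq> S2" using T(1) prodS_cases by blast+
  have dir: "directed_in le1 (fstU ` T)" "directed_in le2 (sndU ` T)"
    by (rule directed_in_image[OF T(2)], use le_T in blast)+
  have "le1 d (fstU s)" "le2 c (sndU s)"
    using T(4) prodS_cases[OF is_lub_in_mem[OF T(3)]] prodLe_UPair by metis+
  then obtain t1 t2 where t: "t1 \<in> T" "le1 d (fstU t1)" "t2 \<in> T" "le2 c (sndU t2)"
    using compact_inD[OF d sub(1) dir(1) is_lub_in_prod_components(1)[OF T(1,3)]]
      compact_inD[OF c sub(2) dir(2) is_lub_in_prod_components(2)[OF T(1,3)]] by blast
  obtain z where z: "z \<in> T" "prodLe le1 le2 t1 z" "prodLe le1 le2 t2 z"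
    using directed_inD[OF T(2) t(1,3)] by blast
  have zz: "z = UPair (fstU z) (sndU z)" "fstU z \<in> S1" "sndU z \<in> S2" using prodS_cases z(1) T(1)
    by blast+
  have t12: "fstU t1 \<in> S1" "sndU t2 \<in> S2" using t(1,3) T(1) prodS_cases by blast+
  have "le1 (fstU t1) (fstU z)" "le2 (sndU t2) (sndU z)" using le_T[OF t(1) z(1,2)] le_T[OF t(3) z(1,3)]
    by simp_all
  then have "le1 d (fstU z)" "le2 c (sndU z)"
    using poset_on_trans[OF p1 compact_in_mem[OF d] t12(1) zz(2) t(2)]
      poset_on_trans[OF p2 compact_in_mem[OF c] t12(2) zz(3) t(4)] by simp_all
  then have "prodLe le1 le2 (UPair d c) z" using zz(1) prodLe_UPair by metis
  then show "\<exists>t\<in>T. prodLe le1 le2 (UPair d c) t" using z(1) by blast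
qed

lemma compact_prod_iff:
  assumes p1: "poset_on S1 le1" and p2: "poset_on S2 le2" and "d \<in> S1" "c \<in> S2"
  shows "compact_in (prodS S1 S2) (prodLe le1 le2) (UPair d c) \<longleftrightarrow> compact_in S1 le1 d \<and> compact_in S2 le2 c"
  using compact_prod_components[OF assms] compact_prod_UPair[OF p1 p2] by blast

lemma prod_compact_approx:
  assumes a1: "omega_algebraic_on S1 le1" and a2: "omega_algebraic_on S2 le2" and x: "x \<in> prodS S1 S2"
  shows "is_lub_in (prodS S1 S2) (prodLe le1 le2)
    {y. compact_in (prodS S1 S2) (prodLe le1 le2) y \<and> prodLe le1 le2 y x} x"
proof (rule is_lub_inI[OF x])
  have p1: "poset_on S1 le1" and p2: "poset_on S2 le2" using omega_algebraic_on_poset a1 a2 by auto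
  obtain b1 where b1: "is_lub_in S1 le1 {} b1" using omega_algebraic_on_ex_lub[OF a1] by blast
  obtain b2 where b2: "is_lub_in S2 le2 {} b2" using omega_algebraic_on_ex_lub[OF a2] by blast
  have bc: "compact_in S1 le1 b1" "compact_in S2 le2 b2" by (rule compact_in_lub_empty, fact)+
  fix u assume u: "u \<in> prodS S1 S2"
    "\<forall>t\<in>{y. compact_in (prodS S1 S2) (prodLe le1 le2) y \<and> prodLe le1 le2 y x}. prodLe le1 le2 t u"
  have xx: "x = UPair (fstU x) (sndU x)" "fstU x \<in> S1" "sndU x \<in> S2" using prodS_cases[OF x] by auto
  have uu: "u = UPair (fstU u) (sndU u)" "fstU u \<in> S1" "sndU u \<in> S2" using prodS_cases[OF u(1)] by auto
  have "le1 (fstU x) (fstU u)"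
  proof (rule is_lub_in_least[OF omega_algebraic_on_compact_approx[OF a1 xx(2)] uu(2)])
    fix d assume d: "d \<in> {c. compact_in S1 le1 c \<and> le1 c (fstU x)}"
    have "compact_in (prodS S1 S2) (prodLe le1 le2) (UPair d b2)"
      using compact_prod_UPair[OF p1 p2 _ bc(2)] d by simp
    moreover have "prodLe le1 le2 (UPair d b2) x"
      using d is_lub_in_least[OF b2 xx(3)] xx(1) prodLe_UPair by (metis empty_iff mem_Collect_eq)
    ultimately have "prodLe le1 le2 (UPair d b2) u" using u(2) by blast
    then show "le1 d (fstU u)" using uu(1) prodLe_UPair by metis
  qed
  moreover have "le2 (sndU x) (sndU u)"
  proof (rule is_lub_in_least[OF omega_algebraic_on_compact_approx[OF a2 xx(3)] uu(3)])
    fix c assume c: "c \<in> {c. compact_in S2 le2 c \<and> le2 c (sndU x)}"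
    have "compact_in (prodS S1 S2) (prodLe le1 le2) (UPair b1 c)"
      using compact_prod_UPair[OF p1 p2 bc(1)] c by simp
    moreover have "prodLe le1 le2 (UPair b1 c) x"
      using c is_lub_in_least[OF b1 xx(2)] xx(1) prodLe_UPair by (metis empty_iff mem_Collect_eq)
    ultimately have "prodLe le1 le2 (UPair b1 c) u" using u(2) by blast
    then show "le2 c (sndU u)" using uu(1) prodLe_UPair by metis
  qed
  ultimately show "prodLe le1 le2 x u" using xx(1) uu(1) prodLe_UPair by metis
qed simp

lemma omega_algebraic_prod:
  assumes a1: "omega_algebraic_on S1 le1" and a2: "omega_algebraic_on S2 le2"
  shows "omega_algebraic_on (prodS S1 S2) (prodLe le1 le2)"
proof -
  have p1: "poset_on S1 le1" and p2: "poset_on S2 le2" using omega_algebraic_on_poset a1 a2 by auto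
  have lubs: "\<exists>s. is_lub_in (prodS S1 S2) (prodLe le1 le2) A s" if A: "A \<subseteq> prodS S1 S2" for A
  proof -
    have "fstU ` A \<subseteq> S1" "sndU ` A \<subseteq> S2" using A prodS_cases by blast+
    then obtain a b where "is_lub_in S1 le1 (fstU ` A) a" "is_lub_in S2 le2 (sndU ` A) b"
      using omega_algebraic_on_ex_lub[OF a1] omega_algebraic_on_ex_lub[OF a2] by meson
    then show ?thesis using is_lub_in_prod[OF A] by blast
  qed
  have "{y. compact_in (prodS S1 S2) (prodLe le1 le2) y}
      \<subseteq> (\<lambda>(d, c). UPair d c) ` ({d. compact_in S1 le1 d} \<times> {c. compact_in S2 le2 c})"
  proof
    fix y assume y: "y \<in> {y. compact_in (prodS S1 S2) (prodLe le1 le2) y}"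
    have yy: "y = UPair (fstU y) (sndU y)" "fstU y \<in> S1" "sndU y \<in> S2"
      using prodS_cases compact_in_mem y by fastforce+
    then have "compact_in S1 le1 (fstU y) \<and> compact_in S2 le2 (sndU y)"
      using compact_prod_iff[OF p1 p2 yy(2,3)] y by simp
    then show "y \<in> (\<lambda>(d, c). UPair d c) ` ({d. compact_in S1 le1 d} \<times> {c. compact_in S2 le2 c})"
      using yy(1) by (intro image_eqI[of _ _ "(fstU y, sndU y)"]) auto
  qed
  moreover have "countable ((\<lambda>(d, c). UPair d c) ` ({d. compact_in S1 le1 d} \<times> {c. compact_in S2 le2 c}))"
    using omega_algebraic_on_countable[OF a1] omega_algebraic_on_countable[OF a2] by simp
  ultimately have "countable {y. compact_in (prodS S1 S2) (prodLe le1 le2) y}" by (rule countable_subset)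
  then show ?thesis
    unfolding omega_algebraic_on_def using poset_on_prod[OF p1 p2] lubs prod_compact_approx[OF a1 a2]
      by blast
qed

section \<open>Embedding-projection pairs between function spaces and products\<close>

text \<open>An embedding-projection pair \<open>(e, p)\<close> between levels \<open>L0\<close> and \<open>L1\<close> lifts to
  \<open>f \<mapsto> f \<circ> p\<close> and \<open>g \<mapsto> g \<circ> e\<close> between \<open>[L0 \<rightarrow> R]\<close> and \<open>[L1 \<rightarrow> R]\<close>, represented through the
  values on compact arguments.\<close>

definition fun_emb :: "('a::complete_lattice) level \<Rightarrow> 'a level \<Rightarrow> ('a U \<Rightarrow> 'a U) \<Rightarrow> 'a U \<Rightarrow> 'a U" where
  "fun_emb L0 L1 p f = UFun (\<lambda>i. appD L0 f (p (enum L1 i)))"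

definition fun_proj :: "('a::complete_lattice) level \<Rightarrow> 'a level \<Rightarrow> ('a U \<Rightarrow> 'a U) \<Rightarrow> 'a U \<Rightarrow> 'a U" where
  "fun_proj L0 L1 e g = UFun (\<lambda>i. appD L1 g (e (enum L0 i)))"

lemma unF_fun_emb[simp]: "unF (fun_emb L0 L1 p f) i = appD L0 f (p (enum L1 i))"
  unfolding fun_emb_def by simp

lemma unF_fun_proj[simp]: "unF (fun_proj L0 L1 e g) i = appD L1 g (e (enum L0 i))"
  unfolding fun_proj_def by simp

context
  fixes L0 L1 :: "('a::complete_lattice) level" and e p
  assumes L0: "omega_algebraic_level L0" and L1: "omega_algebraic_level L1"
    and ep: "ep_pair (fst L0) (snd L0) (fst L1) (snd L1) e p"
begin

lemma fun_emb_in: "fun_emb L0 L1 p f \<in> D_of L1"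
  unfolding fun_emb_def UFun_in_D_of
  using appD_mono[OF L0 ep_pair_proj_in[OF ep enum_in[OF L1]] ep_pair_proj_in[OF ep enum_in[OF L1]]]
    ep_pair_proj_mono[OF ep enum_in[OF L1] enum_in[OF L1]] by blast

lemma fun_proj_in: "fun_proj L0 L1 e g \<in> D_of L0"
  unfolding fun_proj_def UFun_in_D_of
  using appD_mono[OF L1 ep_pair_emb_in[OF ep enum_in[OF L0]] ep_pair_emb_in[OF ep enum_in[OF L0]]]
    ep_pair_emb_mono[OF ep enum_in[OF L0] enum_in[OF L0]] by blast

lemma appD_fun_emb:
  assumes f: "f \<in> D_of L0" and x: "x \<in> fst L1"
  shows "appD L1 (fun_emb L0 L1 p f) x = appD L0 f (p x)"
proof (rule antisym)
  have px: "p x \<in> fst L0" by (rule ep_pair_proj_in[OF ep x])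
  show "appD L1 (fun_emb L0 L1 p f) x \<le> appD L0 f (p x)"
    unfolding appD_def[of L1]
  proof (rule SUP_least)
    fix i assume "i \<in> {i. snd L1 (enum L1 i) x}"
    then have "snd L0 (p (enum L1 i)) (p x)" using ep_pair_proj_mono[OF ep enum_in[OF L1] x] by simp
    then show "unF (fun_emb L0 L1 p f) i \<le> appD L0 f (p x)"
      using appD_mono[OF L0 ep_pair_proj_in[OF ep enum_in[OF L1]] px] by simp
  qed
  show "appD L0 f (p x) \<le> appD L1 (fun_emb L0 L1 p f) x"
    unfolding appD_def[of L0]
  proof (rule SUP_least)
    fix j assume j: "j \<in> {j. snd L0 (enum L0 j) (p x)}"
    have k: "enum L0 j \<in> fst L0" by (rule enum_in[OF L0])
    have "e (enum L0 j) \<in> KC L1"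
      using ep_pair_emb_compact[OF ep omega_algebraic_on_poset[OF L1]] enum_KC[OF L0] unfolding KC_def
        by simp
    then obtain i where i: "enum L1 i = e (enum L0 j)" using enum_surj[OF L1] by blast
    have "snd L1 (enum L1 i) x" using ep_pair_adjoint[OF ep omega_algebraic_on_poset[OF L1] k x] j i
      by simp
    moreover have "unF f j = unF (fun_emb L0 L1 p f) i"
      using i ep_pair_proj_emb[OF ep k] appD_enum[OF L0 f] by simp
    ultimately show "unF f j \<le> appD L1 (fun_emb L0 L1 p f) x"
      unfolding appD_def by (auto intro: SUP_upper)
  qed
qed

lemma appD_fun_proj_le:
  assumes y: "y \<in> fst L0" shows "appD L0 (fun_proj L0 L1 e g) y \<le> appD L1 g (e y)"
  unfolding appD_def[of L0]
proof (rule SUP_least)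
  fix j assume "j \<in> {j. snd L0 (enum L0 j) y}"
  then have "snd L1 (e (enum L0 j)) (e y)" using ep_pair_emb_mono[OF ep enum_in[OF L0] y] by simp
  then show "unF (fun_proj L0 L1 e g) j \<le> appD L1 g (e y)"
    using appD_mono[OF L1 ep_pair_emb_in[OF ep enum_in[OF L0]] ep_pair_emb_in[OF ep y]] by simp
qed

lemma fun_proj_emb:
  assumes f: "f \<in> D_of L0" shows "fun_proj L0 L1 e (fun_emb L0 L1 p f) = f"
proof (rule D_of_eqI[OF fun_proj_in f])
  fix i
  have k: "enum L0 i \<in> fst L0" by (rule enum_in[OF L0])
  have "unF (fun_proj L0 L1 e (fun_emb L0 L1 p f)) i = appD L0 f (p (e (enum L0 i)))"
    using appD_fun_emb[OF f ep_pair_emb_in[OF ep k]] by simp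
  also have "\<dots> = unF f i" using ep_pair_proj_emb[OF ep k] appD_enum[OF L0 f] by simp
  finally show "unF (fun_proj L0 L1 e (fun_emb L0 L1 p f)) i = unF f i" .
qed

lemma fun_emb_proj_le:
  assumes g: "g \<in> D_of L1" shows "leD_of L1 (fun_emb L0 L1 p (fun_proj L0 L1 e g)) g"
  unfolding leD_of_def
proof
  fix i
  have k: "enum L1 i \<in> fst L1" by (rule enum_in[OF L1])
  have "unF (fun_emb L0 L1 p (fun_proj L0 L1 e g)) i = appD L0 (fun_proj L0 L1 e g) (p (enum L1 i))"
    by simp
  also have "\<dots> \<le> appD L1 g (e (p (enum L1 i)))" by (rule appD_fun_proj_le[OF ep_pair_proj_in[OF ep k]])
  also have "\<dots> \<le> appD L1 g (enum L1 i)"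
    by (rule appD_mono[OF L1 ep_pair_emb_in[OF ep ep_pair_proj_in[OF ep k]] k ep_pair_emb_proj_le[OF ep k]])
  also have "\<dots> = unF g i" by (rule appD_enum[OF L1 g])
  finally show "unF (fun_emb L0 L1 p (fun_proj L0 L1 e g)) i \<le> unF g i" .
qed

lemma fun_proj_supF: "fun_proj L0 L1 e (supF A) = supF (fun_proj L0 L1 e ` A)"
  by (rule D_of_eqI[OF fun_proj_in supF_in]) (auto simp: appD_supF image_image fun_proj_in)

lemma ep_pair_fun:
  "ep_pair (D_of L0) (leD_of L0) (D_of L1) (leD_of L1) (fun_emb L0 L1 p) (fun_proj L0 L1 e)"
proof (rule ep_pairI)
  show "leD_of L1 (fun_emb L0 L1 p f) (fun_emb L0 L1 p f')" if "leD_of L0 f f'" for f f'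
    unfolding leD_of_def using appD_mono_fun[OF that] by simp
  show "leD_of L0 (fun_proj L0 L1 e g) (fun_proj L0 L1 e g')" if "leD_of L1 g g'" for g g'
    unfolding leD_of_def using appD_mono_fun[OF that] by simp
  show "is_lub_in (D_of L0) (leD_of L0) (fun_proj L0 L1 e ` A) (fun_proj L0 L1 e s)"
    if "A \<subseteq> D_of L1" "is_lub_in (D_of L1) (leD_of L1) A s" for A s
    using that is_lub_in_D_of_iff fun_proj_supF is_lub_in_supF fun_proj_in by (metis image_subsetI)
qed (simp_all add: fun_emb_in fun_proj_in fun_proj_emb fun_emb_proj_le)

end

definition pair_map :: "('a U \<Rightarrow> 'a U) \<Rightarrow> ('a U \<Rightarrow> 'a U) \<Rightarrow> 'a U \<Rightarrow> 'a U" where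
  "pair_map f g x = (case x of UPair d c \<Rightarrow> UPair (f d) (g c) | _ \<Rightarrow> UUnit)"

lemma pair_map_UPair[simp]: "pair_map f g (UPair d c) = UPair (f d) (g c)"
  unfolding pair_map_def by simp

lemma ep_pair_prod:
  assumes e1: "ep_pair S0 le0 S1 le1 ed pd" and e2: "ep_pair T0 lt0 T1 lt1 ec pc"
  shows "ep_pair (prodS S0 T0) (prodLe le0 lt0) (prodS S1 T1) (prodLe le1 lt1)
    (pair_map ed ec) (pair_map pd pc)"
proof (rule ep_pairI)
  show "pair_map ed ec x \<in> prodS S1 T1" if "x \<in> prodS S0 T0" for x
    using that by (auto elim!: prodS_E simp: ep_pair_emb_in[OF e1] ep_pair_emb_in[OF e2])
  show p_in: "pair_map pd pc y \<in> prodS S0 T0" if "y \<in> prodS S1 T1" for y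
    using that by (auto elim!: prodS_E simp: ep_pair_proj_in[OF e1] ep_pair_proj_in[OF e2])
  show "prodLe le1 lt1 (pair_map ed ec x) (pair_map ed ec y)"
    if "x \<in> prodS S0 T0" "y \<in> prodS S0 T0" "prodLe le0 lt0 x y" for x y
    using that by (auto elim!: prodS_E simp: ep_pair_emb_mono[OF e1] ep_pair_emb_mono[OF e2])
  show "prodLe le0 lt0 (pair_map pd pc x) (pair_map pd pc y)"
    if "x \<in> prodS S1 T1" "y \<in> prodS S1 T1" "prodLe le1 lt1 x y" for x y
    using that by (auto elim!: prodS_E simp: ep_pair_proj_mono[OF e1] ep_pair_proj_mono[OF e2])
  show "pair_map pd pc (pair_map ed ec x) = x" if "x \<in> prodS S0 T0" for x
    using that by (auto elim!: prodS_E simp: ep_pair_proj_emb[OF e1] ep_pair_proj_emb[OF e2])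
  show "prodLe le1 lt1 (pair_map ed ec (pair_map pd pc y)) y" if "y \<in> prodS S1 T1" for y
    using that by (auto elim!: prodS_E simp: ep_pair_emb_proj_le[OF e1] ep_pair_emb_proj_le[OF e2])
  fix A s assume A: "A \<subseteq> prodS S1 T1" and s: "is_lub_in (prodS S1 T1) (prodLe le1 lt1) A s"
  have pA: "pair_map pd pc ` A \<subseteq> prodS S0 T0" using p_in A by blast
  have pair_map_A: "pair_map pd pc x = UPair (pd (fstU x)) (pc (sndU x))" if "x \<in> A" for x
    using that A by (auto elim!: prodS_E)
  have "fstU ` pair_map pd pc ` A = pd ` fstU ` A" "sndU ` pair_map pd pc ` A = pc ` sndU ` A"
    using pair_map_A by (force simp: image_image)+
  moreover have "fstU ` A \<subseteq> S1" "sndU ` A \<subseteq> T1" using A prodS_cases by blast+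
  ultimately have "is_lub_in (prodS S0 T0) (prodLe le0 lt0) (pair_map pd pc ` A)
      (UPair (pd (fstU s)) (pc (sndU s)))"
    using is_lub_in_prod[OF pA] ep_pair_proj_lub[OF e1 _ is_lub_in_prod_components(1)[OF A s]]
      ep_pair_proj_lub[OF e2 _ is_lub_in_prod_components(2)[OF A s]] by simp
  then show "is_lub_in (prodS S0 T0) (prodLe le0 lt0) (pair_map pd pc ` A) (pair_map pd pc s)"
    using is_lub_in_mem[OF s] by (auto elim!: prodS_E)
qed

definition eC :: "nat \<Rightarrow> ('a::complete_lattice) U \<Rightarrow> 'a U" where
  "eC n = fst (emb n)"

definition eD :: "nat \<Rightarrow> ('a::complete_lattice) U \<Rightarrow> 'a U" where
  "eD n = fst (snd (snd (emb n)))"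

lemma eC_pC_0: "eC 0 = (\<lambda>_. UPair (UFun (\<lambda>_. bot)) UUnit)" "pC 0 = (\<lambda>_. UUnit)"
  unfolding eC_def pC_def by (simp_all add: Let_def)

lemma eC_pC_Suc:
  "eC (Suc n) = (pair_map (eD n) (eC n) :: ('a::complete_lattice) U \<Rightarrow> 'a U)"
  "pC (Suc n) = (pair_map (pD n) (pC n) :: ('a::complete_lattice) U \<Rightarrow> 'a U)"
proof -
  obtain e p e' p' where "(emb n :: ('a U \<Rightarrow> 'a U) \<times> ('a U \<Rightarrow> 'a U) \<times> ('a U \<Rightarrow> 'a U) \<times> ('a U \<Rightarrow> 'a U))
      = (e, p, e', p')"
    by (metis prod.exhaust)
  then show "eC (Suc n) = (pair_map (eD n) (eC n) :: 'a U \<Rightarrow> 'a U)"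
    "pC (Suc n) = (pair_map (pD n) (pC n) :: 'a U \<Rightarrow> 'a U)"
    unfolding eC_def eD_def pC_def pD_def pair_map_def by (simp_all add: Let_def fun_eq_iff)
qed

lemma eD_pD:
  "eD n = (fun_emb (lev n) (lev (Suc n)) (pC n) :: ('a::complete_lattice) U \<Rightarrow> 'a U)"
  "pD n = (fun_proj (lev n) (lev (Suc n)) (eC n) :: ('a::complete_lattice) U \<Rightarrow> 'a U)"
  unfolding eC_def eD_def pC_def pD_def fun_emb_def fun_proj_def
  by (cases n; simp add: Let_def fun_eq_iff split: prod.split)+

lemma Cset_Suc: "Cset (Suc n) = prodS (Dset n) (Cset n)" "leC_lev (Suc n) = prodLe (leD_lev n) (leC_lev n)"
  unfolding Cset_def leC_lev_def Dset_def leD_lev_def lev_Suc by simp_all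

lemma Cset_0: "Cset 0 = {UUnit}" "leC_lev 0 = (\<lambda>x y. True)"
  unfolding Cset_def leC_lev_def by simp_all

lemma poset_on_Dset: "poset_on (Dset n) (leD_lev n)"
  unfolding Dset_def leD_lev_def by (rule poset_on_D_of)

section \<open>Inverse limits interpreted by intersection types\<close>

text \<open>Below the depth of \<open>t\<close>,
  comparisons with \<open>sem t n\<close> are not preserved by the embeddings; \<open>below t n\<close> is the replacement
  that is.\<close>

locale leveled_semantics =
  fixes S :: "nat \<Rightarrow> 'b set" and le :: "nat \<Rightarrow> 'b \<Rightarrow> 'b \<Rightarrow> bool" and e p :: "nat \<Rightarrow> 'b \<Rightarrow> 'b"
    and isT :: "'t \<Rightarrow> bool" and sem :: "'t \<Rightarrow> nat \<Rightarrow> 'b" and below :: "'t \<Rightarrow> nat \<Rightarrow> 'b \<Rightarrow> bool"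
    and depth :: "'t \<Rightarrow> nat"
  assumes omega_algebraic: "omega_algebraic_on (S n) (le n)"
    and ep_pair: "ep_pair (S n) (le n) (S (Suc n)) (le (Suc n)) (e n) (p n)"
    and sem_in: "isT t \<Longrightarrow> sem t n \<in> S n"
    and proj_sem: "isT t \<Longrightarrow> p n (sem t (Suc n)) = sem t n"
    and below_emb: "isT t \<Longrightarrow> c \<in> S n \<Longrightarrow> below t (Suc n) (e n c) \<longleftrightarrow> below t n c"
    and below_mono: "isT t \<Longrightarrow> c \<in> S n \<Longrightarrow> c' \<in> S n \<Longrightarrow> le n c c' \<Longrightarrow> below t n c \<Longrightarrow> below t n c'"
    and below_iff: "isT t \<Longrightarrow> depth t \<le> n \<Longrightarrow> c \<in> S n \<Longrightarrow> below t n c \<longleftrightarrow> le n (sem t n) c"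
    and sem_compact: "isT t \<Longrightarrow> depth t \<le> n \<Longrightarrow> compact_in (S n) (le n) (sem t n)"
begin

definition inv_limit :: "(nat \<Rightarrow> 'b) set" where
  "inv_limit = {x. \<forall>n. x n \<in> S n \<and> p n (x (Suc n)) = x n}"

lemma inv_limitD: "x \<in> inv_limit \<Longrightarrow> x n \<in> S n" "x \<in> inv_limit \<Longrightarrow> p n (x (Suc n)) = x n"
  unfolding inv_limit_def by blast+

lemma sem_inv_limit: "isT t \<Longrightarrow> (\<lambda>n. sem t n) \<in> inv_limit"
  unfolding inv_limit_def using sem_in proj_sem by blast

lemma poset: "poset_on (S n) (le n)"
  by (rule omega_algebraic_on_poset[OF omega_algebraic])

text \<open>An inequality between a type and an element of the limit propagates from one level at least
  the depth of the type to all levels: upwards through \<^term>\<open>below\<close>, downwards by projecting.\<close>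

lemma sem_le_all_levels:
  assumes x: "x \<in> inv_limit" and t: "isT t" and N: "depth t \<le> N" and le: "le N (sem t N) (x N)"
  shows "le n (sem t n) (x n)"
proof (cases "N \<le> n")
  case True
  then show ?thesis
  proof (induction n rule: dec_induct)
    case (step m)
    have "below t m (x m)" using below_iff[OF t _ inv_limitD(1)[OF x]] N step by simp
    then have "below t (Suc m) (e m (x m))" using below_emb[OF t inv_limitD(1)[OF x]] by simp
    moreover have "le (Suc m) (e m (x m)) (x (Suc m))"
      using ep_pair_emb_proj_le[OF ep_pair inv_limitD(1)[OF x, of "Suc m"]] inv_limitD(2)[OF x] by simp
    ultimately have "below t (Suc m) (x (Suc m))"
      using below_mono[OF t ep_pair_emb_in[OF ep_pair inv_limitD(1)[OF x]] inv_limitD(1)[OF x]] by blast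
    then show ?case using below_iff[OF t _ inv_limitD(1)[OF x]] N step by simp
  qed (rule le)
next
  case False
  then have "n \<le> N" by simp
  then show ?thesis
  proof (induction n rule: inc_induct)
    case (step m)
    then have "le m (p m (sem t (Suc m))) (p m (x (Suc m)))"
      using ep_pair_proj_mono[OF ep_pair sem_in[OF t] inv_limitD(1)[OF x]] by simp
    then show ?case using proj_sem[OF t] inv_limitD(2)[OF x] by simp
  qed (use le in simp_all)
qed

lemma below_antimono:
  assumes t1: "isT t1" and t2: "isT t2" and le: "\<forall>m. le m (sem t1 m) (sem t2 m)"
    and c: "c \<in> S n" and below: "below t2 n c"
  shows "below t1 n c"
proof -
  define N where "N = max n (max (depth t1) (depth t2))"
  have "\<forall>c\<in>S m. below t2 m c \<longrightarrow> below t1 m c" if "m \<le> N" for m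
    using that
  proof (induction m rule: inc_induct)
    case base
    have "le N (sem t1 N) c" if "c \<in> S N" "le N (sem t2 N) c" for c
      using poset_on_trans[OF poset sem_in[OF t1] sem_in[OF t2] that(1)] le that(2) by blast
    then show ?case using below_iff[OF t1] below_iff[OF t2] N_def by simp
  next
    case (step m)
    show ?case using step.IH below_emb[OF t1] below_emb[OF t2] ep_pair_emb_in[OF ep_pair] by blast
  qed
  then show ?thesis using c below N_def by simp
qed

end

locale type_interpretation = leveled_semantics S le e p isT sem below depth
  for S :: "nat \<Rightarrow> 'b set" and le e p and isT :: "'a ty \<Rightarrow> bool" and sem below depth +
  fixes leT :: "'a ty \<Rightarrow> 'a ty \<Rightarrow> bool"
  assumes isT_Om: "isT Om" and sem_Om_le: "c \<in> S n \<Longrightarrow> le n (sem Om n) c"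
    and isT_Conj: "isT s \<Longrightarrow> isT t \<Longrightarrow> isT (Conj s t)"
    and sem_Conj: "isT s \<Longrightarrow> isT t \<Longrightarrow> is_lub_in (S n) (le n) {sem s n, sem t n} (sem (Conj s t) n)"
    and definable: "compact_in (S n) (le n) c \<Longrightarrow> \<exists>t. isT t \<and> depth t \<le> n \<and> sem t n = c"
    and sound: "leT s t \<Longrightarrow> le n (sem t n) (sem s n)"
    and complete: "isT s \<Longrightarrow> isT t \<Longrightarrow> \<forall>n. le n (sem t n) (sem s n) \<Longrightarrow> leT s t"
begin

definition filter_sup :: "'a ty set \<Rightarrow> nat \<Rightarrow> 'b" where
  "filter_sup f = (\<lambda>n. lub_in (S n) (le n) ((\<lambda>t. sem t n) ` f))"

definition filter_of :: "(nat \<Rightarrow> 'b) \<Rightarrow> 'a ty set" where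
  "filter_of x = {t. isT t \<and> (\<forall>n. le n (sem t n) (x n))}"

lemma sem_image_subset: "f \<in> filters {t. isT t} leT \<Longrightarrow> (\<lambda>t. sem t n) ` f \<subseteq> S n"
  using filtersD(1) sem_in by blast

lemma is_lub_in_filter_sup:
  "f \<in> filters {t. isT t} leT \<Longrightarrow> is_lub_in (S n) (le n) ((\<lambda>t. sem t n) ` f) (filter_sup f n)"
  unfolding filter_sup_def by (rule lub_in_is_lub[OF omega_algebraic sem_image_subset])

lemma filter_sup_inv_limit:
  assumes f: "f \<in> filters {t. isT t} leT" shows "filter_sup f \<in> inv_limit"
  unfolding inv_limit_def
proof (intro CollectI allI conjI)
  fix n
  show "filter_sup f n \<in> S n" using is_lub_in_mem[OF is_lub_in_filter_sup[OF f]] .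
  have "p n (sem t (Suc n)) = sem t n" if "t \<in> f" for t
    using proj_sem filtersD(1)[OF f] that by blast
  then have "p n ` (\<lambda>t. sem t (Suc n)) ` f = (\<lambda>t. sem t n) ` f"
    unfolding image_image by (rule image_cong[OF refl])
  moreover have "is_lub_in (S n) (le n) (p n ` (\<lambda>t. sem t (Suc n)) ` f) (p n (filter_sup f (Suc n)))"
    by (rule ep_pair_proj_lub[OF ep_pair sem_image_subset[OF f] is_lub_in_filter_sup[OF f]])
  ultimately have "is_lub_in (S n) (le n) ((\<lambda>t. sem t n) ` f) (p n (filter_sup f (Suc n)))" by simp
  then show "p n (filter_sup f (Suc n)) = filter_sup f n"
    using is_lub_in_unique[OF poset _ is_lub_in_filter_sup[OF f]] by blast
qed

lemma filter_of_filter: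
  assumes x: "x \<in> inv_limit" shows "filter_of x \<in> filters {t. isT t} leT"
  unfolding filters_def
proof (intro CollectI conjI ballI impI)
  show "filter_of x \<subseteq> {t. isT t}" unfolding filter_of_def by blast
  show "Om \<in> filter_of x" unfolding filter_of_def using isT_Om sem_Om_le inv_limitD(1)[OF x] by blast
next
  fix s t assume s: "s \<in> filter_of x" and t: "t \<in> {t. isT t}" and st: "leT s t"
  have "le n (sem t n) (x n)" for n
    using poset_on_trans[OF poset sem_in sem_in inv_limitD(1)[OF x] sound[OF st]] s t
    unfolding filter_of_def by blast
  then show "t \<in> filter_of x" using t unfolding filter_of_def by blast
next
  fix s t assume s: "s \<in> filter_of x" and t: "t \<in> filter_of x"
  then have st: "isT s" "isT t" unfolding filter_of_def by auto
  have "le n (sem (Conj s t) n) (x n)" for n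
    using is_lub_in_least[OF sem_Conj[OF st] inv_limitD(1)[OF x]] s t unfolding filter_of_def by blast
  then show "Conj s t \<in> filter_of x" unfolding filter_of_def using isT_Conj[OF st] by blast
qed

lemma filter_of_filter_sup:
  assumes f: "f \<in> filters {t. isT t} leT" shows "filter_of (filter_sup f) = f"
proof
  show "f \<subseteq> filter_of (filter_sup f)"
    unfolding filter_of_def using is_lub_in_upper[OF is_lub_in_filter_sup[OF f]] filtersD(1)[OF f]
      by blast
  show "filter_of (filter_sup f) \<subseteq> f"
  proof
    fix t assume t: "t \<in> filter_of (filter_sup f)"
    define N where "N = depth t"
    have ti: "isT t" and le_sup: "le N (sem t N) (filter_sup f N)"
      using t unfolding filter_of_def by auto
    have "directed_in (\<lambda>s t. leT t s) f"
    proof (rule filters_directed[OF f])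
      fix s t assume "s \<in> {t. isT t}" "t \<in> {t. isT t}"
      then show "leT (Conj s t) s \<and> leT (Conj s t) t"
        using complete[OF isT_Conj] is_lub_in_upper[OF sem_Conj] by simp
    qed
    then have "directed_in (le N) ((\<lambda>s. sem s N) ` f)"
      by (rule directed_in_image) (rule sound)
    then obtain s where s: "s \<in> f" "le N (sem t N) (sem s N)"
      using compact_inD[OF sem_compact[OF ti] sem_image_subset[OF f] _ is_lub_in_filter_sup[OF f] le_sup]
      unfolding N_def by blast
    have si: "isT s" using s(1) filtersD(1)[OF f] by blast
    have "leT s t"
      using complete[OF si ti] sem_le_all_levels[OF sem_inv_limit[OF si] ti _ s(2)] N_def by blast
    then show "t \<in> f" using filtersD(3)[OF f s(1)] ti by simp
  qed
qed

lemma filter_sup_filter_of: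
  assumes x: "x \<in> inv_limit" shows "filter_sup (filter_of x) = x"
proof
  fix n
  have "is_lub_in (S n) (le n) ((\<lambda>t. sem t n) ` filter_of x) (x n)"
  proof (rule is_lub_inI[OF inv_limitD(1)[OF x]])
    show "le n a (x n)" if "a \<in> (\<lambda>t. sem t n) ` filter_of x" for a using that unfolding filter_of_def
      by blast
    fix u assume u: "u \<in> S n" "\<forall>a\<in>(\<lambda>t. sem t n) ` filter_of x. le n a u"
    show "le n (x n) u"
    proof (rule is_lub_in_least[OF omega_algebraic_on_compact_approx[OF omega_algebraic inv_limitD(1)[OF x]]
          u(1)])
      fix c assume c: "c \<in> {c. compact_in (S n) (le n) c \<and> le n c (x n)}"
      then obtain t where t: "isT t" "depth t \<le> n" "sem t n = c" using definable by blast
      then have "t \<in> filter_of x" unfolding filter_of_def using sem_le_all_levels[OF x] c by blast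
      then show "le n c u" using u(2) t(3) by blast
    qed
  qed
  then show "filter_sup (filter_of x) n = x n"
    unfolding filter_sup_def by (rule lub_in_eq[OF poset])
qed

theorem order_iso_filters:
  "order_iso (filters {t. isT t} leT) (\<subseteq>) inv_limit (\<lambda>x y. \<forall>n. le n (x n) (y n))"
proof (rule order_isoI[where \<phi>=filter_sup and \<psi>=filter_of])
  show "\<forall>n. le n (filter_sup f n) (filter_sup g n)"
    if "f \<in> filters {t. isT t} leT" "g \<in> filters {t. isT t} leT" "f \<subseteq> g" for f g
    using is_lub_in_least[OF is_lub_in_filter_sup[OF that(1)]
        is_lub_in_mem[OF is_lub_in_filter_sup[OF that(2)]]]
      is_lub_in_upper[OF is_lub_in_filter_sup[OF that(2)]] that(3) by blast
  show "filter_of x \<subseteq> filter_of y" if "x \<in> inv_limit" "y \<in> inv_limit" "\<forall>n. le n (x n) (y n)" for x y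
    using poset_on_trans[OF poset sem_in inv_limitD(1)[OF that(1)] inv_limitD(1)[OF that(2)]] that(3)
    unfolding filter_of_def by blast
qed (simp_all add: filter_sup_inv_limit filter_of_filter filter_of_filter_sup filter_sup_filter_of)

end

section \<open>The levels \<open>C\<^sub>n\<close>, \<open>D\<^sub>n\<close> over an \<open>\<omega>\<close>-algebraic lattice\<close>

context
  assumes algebraic: "\<forall>x::'a::complete_lattice. x = Sup {c. compactR c \<and> c \<le> x}"
    and countable_compacts: "countable {c::'a. compactR c}"
begin

lemma steps_below_lub:
  assumes L: "omega_algebraic_level (L::'a level)" and f: "f \<in> D_of L"
  shows "is_lub_in (D_of L) (leD_of L) (steps_below L f) f"
proof (rule is_lub_inI[OF f])
  show "leD_of L t f" if "t \<in> steps_below L f" for t using that unfolding steps_below_def by blast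
  fix u assume u: "u \<in> D_of L" and ub: "\<forall>t\<in>steps_below L f. leD_of L t u"
  show "leD_of L f u" unfolding leD_of_def
  proof
    fix i
    have "c \<le> unF u i" if c: "compactR c" "c \<le> unF f i" for c
    proof -
      have "step_fun L (enum L i) c \<in> steps_below L f"
        unfolding steps_below_def using step_fun_le_iff[OF L f refl] enum_KC[OF L] c by blast
      then show ?thesis using ub step_fun_le_iff[OF L u refl] by blast
    qed
    then have "Sup {c. compactR c \<and> c \<le> unF f i} \<le> unF u i" by (blast intro: Sup_least)
    then show "unF f i \<le> unF u i" using algebraic by metis
  qed
qed

lemma compact_D_of_finite_steps:
  assumes L: "omega_algebraic_level (L::'a level)" and f: "compact_in (D_of L) (leD_of L) f"
  shows "\<exists>F. finite F \<and> F \<subseteq> steps_below L f \<and> f = supF F"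
  using compact_in_finite_lub_of_subset[OF poset_on_D_of f steps_below_subset[OF L]
      steps_below_lub[OF L compact_in_mem[OF f]]] is_lub_in_supF steps_below_subset[OF L]
  by (meson subset_trans)

lemma omega_algebraic_D_of:
  assumes L: "omega_algebraic_level (L::'a level)"
  shows "omega_algebraic_on (D_of L) (leD_of L)"
proof -
  define steps where "steps = (\<lambda>(k, a). step_fun L k a) ` (KC L \<times> {a::'a. compactR a})"
  have "countable steps" unfolding steps_def using KC_countable[OF L] countable_compacts by simp
  then have "countable (supF ` {F. finite F \<and> F \<subseteq> steps})"
    using countable_Collect_finite_subset by blast
  moreover have "{f. compact_in (D_of L) (leD_of L) f} \<subseteq> supF ` {F. finite F \<and> F \<subseteq> steps}"
  proof
    fix f assume "f \<in> {f. compact_in (D_of L) (leD_of L) f}"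
    then obtain F where "finite F" "F \<subseteq> steps_below L f" "f = supF F"
      using compact_D_of_finite_steps[OF L] by blast
    moreover have "steps_below L f \<subseteq> steps" unfolding steps_below_def steps_def by auto
    ultimately show "f \<in> supF ` {F. finite F \<and> F \<subseteq> steps}" by blast
  qed
  ultimately have "countable {f. compact_in (D_of L) (leD_of L) f}" by (rule countable_subset[rotated])
  moreover have "is_lub_in (D_of L) (leD_of L) {c. compact_in (D_of L) (leD_of L) c \<and> leD_of L c f} f"
    if f: "f \<in> D_of L" for f
  proof (rule is_lub_in_superset[OF steps_below_lub[OF L f]])
    show "steps_below L f \<subseteq> {c. compact_in (D_of L) (leD_of L) c \<and> leD_of L c f}"
      unfolding steps_below_def using step_fun_compact[OF L] by blast
  qed (auto dest: compact_in_mem)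
  ultimately show ?thesis unfolding omega_algebraic_on_def using poset_on_D_of is_lub_in_supF by blast
qed

lemma omega_algebraic_lev: "omega_algebraic_level (lev n :: 'a level)"
proof (induction n)
  case 0
  have "compact_in {UUnit} (\<lambda>x y. True) UUnit" unfolding compact_in_def directed_in_def by auto
  moreover have "countable {c. compact_in {UUnit} (\<lambda>x y. True) c}"
    by (rule countable_subset[of _ "{UUnit}"]) (auto dest: compact_in_mem)
  ultimately show ?case unfolding omega_algebraic_on_def poset_on_def is_lub_in_def by simp
next
  case (Suc n)
  have "omega_algebraic_on (D_of (lev n)) (leD_of (lev n :: 'a level))"
    by (rule omega_algebraic_D_of[OF Suc.IH])
  then show ?case unfolding lev_Suc fst_conv snd_conv using Suc.IH by (rule omega_algebraic_prod)
qed

lemma omega_algebraic_Cset: "omega_algebraic_on (Cset n) (leC_lev n :: 'a U \<Rightarrow> 'a U \<Rightarrow> bool)"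
  unfolding Cset_def leC_lev_def by (rule omega_algebraic_lev)

lemma omega_algebraic_Dset: "omega_algebraic_on (Dset n) (leD_lev n :: 'a U \<Rightarrow> 'a U \<Rightarrow> bool)"
  unfolding Dset_def leD_lev_def by (rule omega_algebraic_D_of[OF omega_algebraic_lev])

lemma poset_on_Cset: "poset_on (Cset n) (leC_lev n :: 'a U \<Rightarrow> 'a U \<Rightarrow> bool)"
  by (rule omega_algebraic_on_poset[OF omega_algebraic_Cset])

lemma ep_pair_C_0:
  "ep_pair (Cset 0) (leC_lev 0) (Cset (Suc 0)) (leC_lev (Suc 0)) (eC 0 :: 'a U \<Rightarrow> 'a U) (pC 0)"
proof (rule ep_pairI)
  have "UFun (\<lambda>_. bot) \<in> Dset 0" unfolding Dset_def UFun_in_D_of by simp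
  then show "eC 0 x \<in> Cset (Suc 0)" for x :: "'a U" by (simp add: eC_pC_0 Cset_Suc Cset_0)
  show "leC_lev (Suc 0) (eC 0 (pC 0 y)) y" if "y \<in> Cset (Suc 0)" for y :: "'a U"
    using that by (auto elim!: prodS_E simp: eC_pC_0 Cset_Suc Cset_0 leD_lev_def leD_of_def)
qed (simp_all add: eC_pC_0 Cset_Suc Cset_0 leD_lev_def leD_of_def is_lub_in_def)

lemma ep_pair_C_D:
  "ep_pair (Cset n) (leC_lev n) (Cset (Suc n)) (leC_lev (Suc n)) (eC n :: 'a U \<Rightarrow> 'a U) (pC n)
 \<and> ep_pair (Dset n) (leD_lev n) (Dset (Suc n)) (leD_lev (Suc n)) (eD n :: 'a U \<Rightarrow> 'a U) (pD n)"
proof (induction n)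
  case 0
  then show ?case
    using ep_pair_C_0 ep_pair_fun[OF omega_algebraic_lev omega_algebraic_lev, of 0 "Suc 0"]
    unfolding Dset_def leD_lev_def Cset_def leC_lev_def eD_pD by simp
next
  case (Suc n)
  have "ep_pair (prodS (Dset n) (Cset n)) (prodLe (leD_lev n) (leC_lev n))
      (prodS (Dset (Suc n)) (Cset (Suc n))) (prodLe (leD_lev (Suc n)) (leC_lev (Suc n)))
      (pair_map (eD n) (eC n) :: 'a U \<Rightarrow> 'a U) (pair_map (pD n) (pC n))"
    using Suc by (intro ep_pair_prod) simp_all
  then have "ep_pair (Cset (Suc n)) (leC_lev (Suc n)) (Cset (Suc (Suc n))) (leC_lev (Suc (Suc n)))
      (eC (Suc n) :: 'a U \<Rightarrow> 'a U) (pC (Suc n))"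
    by (simp only: Cset_Suc eC_pC_Suc)
  then show ?case
    using ep_pair_fun[OF omega_algebraic_lev omega_algebraic_lev, of "Suc n" "Suc (Suc n)"]
    unfolding Dset_def leD_lev_def Cset_def leC_lev_def eD_pD by simp
qed

lemma ep_pair_C: "ep_pair (Cset n) (leC_lev n) (Cset (Suc n)) (leC_lev (Suc n)) (eC n :: 'a U \<Rightarrow> 'a U) (pC n)"
  using ep_pair_C_D by blast

lemma ep_pair_D: "ep_pair (Dset n) (leD_lev n) (Dset (Suc n)) (leD_lev (Suc n)) (eD n :: 'a U \<Rightarrow> 'a U) (pD n)"
  using ep_pair_C_D by blast

section \<open>Types interpreted at the finite levels\<close>

definition botC :: "nat \<Rightarrow> ('a::complete_lattice) U" where
  "botC n = lub_in (Cset n) (leC_lev n) {}"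

definition joinC :: "nat \<Rightarrow> ('a::complete_lattice) U \<Rightarrow> 'a U \<Rightarrow> 'a U" where
  "joinC n x y = lub_in (Cset n) (leC_lev n) {x, y}"

text \<open>The predicates \<open>belowC t n c\<close> and
  \<open>belowD d n f\<close> express \<open>semC t n \<sqsubseteq> c\<close> and \<open>semD d n \<sqsubseteq> f\<close> by recursion on the type: unlike the order,
  they are compatible with the embeddings at every level, and they agree with it as soon as
  \<open>n\<close> is at least the depth of the type.\<close>

fun semC :: "('a::complete_lattice) ty \<Rightarrow> nat \<Rightarrow> 'a U"
  and valD :: "('a::complete_lattice) ty \<Rightarrow> nat \<Rightarrow> 'a U \<Rightarrow> 'a"
  and belowC :: "('a::complete_lattice) ty \<Rightarrow> nat \<Rightarrow> 'a U \<Rightarrow> bool"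
  and belowD :: "('a::complete_lattice) ty \<Rightarrow> nat \<Rightarrow> 'a U \<Rightarrow> bool" where
  "semC Om n = botC n"
| "semC (Conj a b) n = joinC n (semC a n) (semC b n)"
| "semC (Times d k) n = (case n of 0 \<Rightarrow> UUnit
     | Suc m \<Rightarrow> UPair (UFun (\<lambda>i. valD d m (enum (lev m) i))) (semC k m))"
| "semC (Psi _) n = UUnit"
| "semC (Arr _ _) n = UUnit"
| "valD (Psi a) n c = a"
| "valD Om n c = bot"
| "valD (Conj a b) n c = sup (valD a n c) (valD b n c)"
| "valD (Arr k r) n c = (if belowC k n c then valR r else bot)"
| "valD (Times _ _) n c = bot"
| "belowC Om n c = True"
| "belowC (Conj a b) n c = (belowC a n c \<and> belowC b n c)"
| "belowC (Times d k) n c = (case n of 0 \<Rightarrow> belowD d 0 (UFun (\<lambda>_. bot)) \<and> belowC k 0 UUnit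
     | Suc m \<Rightarrow> belowD d m (fstU c) \<and> belowC k m (sndU c))"
| "belowC (Psi _) n c = False"
| "belowC (Arr _ _) n c = False"
| "belowD (Psi a) n f = (a \<le> appD (lev n) f (botC n))"
| "belowD Om n f = True"
| "belowD (Conj a b) n f = (belowD a n f \<and> belowD b n f)"
| "belowD (Arr k r) n f = (valR r \<le> appD (lev n) f (semC k n))"
| "belowD (Times _ _) n f = False"

definition semD :: "('a::complete_lattice) ty \<Rightarrow> nat \<Rightarrow> 'a U" where
  "semD d n = UFun (\<lambda>i. valD d n (enum (lev n) i))"

fun depth :: "'a ty \<Rightarrow> nat" where
  "depth (Psi _) = 0"
| "depth Om = 0"
| "depth (Conj a b) = max (depth a) (depth b)"
| "depth (Arr k r) = max (depth k) (depth r)"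
| "depth (Times d k) = Suc (max (depth d) (depth k))"

lemma unF_semD[simp]: "unF (semD d n) i = valD d n (enum (lev n) i)"
  unfolding semD_def by simp

lemma semC_Times[simp]: "semC (Times d k) 0 = UUnit" "semC (Times d k) (Suc m) = UPair (semD d m) (semC k m)"
  unfolding semD_def by simp_all

declare semC.simps(3)[simp del]

lemma semD_Om: "semD Om n = supF {}"
  unfolding semD_def supF_def by simp

lemma semD_Conj: "semD (Conj a b) n = supF {semD a n, semD b n}"
  unfolding semD_def supF_def by simp

lemma leD_lev_semD_iff:
  "leD_lev n (semD s n) (semD t n) \<longleftrightarrow> (\<forall>i. valD s n (enum (lev n) i) \<le> valD t n (enum (lev n) i))"
  by (simp add: leD_lev_def leD_of_def)

lemma valD_isR: "isR r \<Longrightarrow> valD r n c = valR r"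
  by (induction r) auto

lemma isR_isD: "isR r \<Longrightarrow> isD r"
  by (induction r) auto

lemma enum_Cset: "enum (lev n) i \<in> (Cset n :: 'a U set)"
  unfolding Cset_def using enum_in[OF omega_algebraic_lev] .

lemma enum_Cset_compact: "compact_in (Cset n) (leC_lev n) (enum (lev n) i :: 'a U)"
  unfolding Cset_def leC_lev_def using enum_KC[OF omega_algebraic_lev] unfolding KC_def by blast

lemma enum_Cset_surj: "compact_in (Cset n) (leC_lev n) (c :: 'a U) \<Longrightarrow> \<exists>i. enum (lev n) i = c"
  unfolding Cset_def leC_lev_def using enum_surj[OF omega_algebraic_lev] unfolding KC_def by blast

lemma is_lub_in_Dset: "A \<subseteq> Dset n \<Longrightarrow> is_lub_in (Dset n) (leD_lev n) A (supF A)"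
  unfolding Dset_def leD_lev_def by (rule is_lub_in_supF)

lemma is_lub_in_Cset:
  "A \<subseteq> Cset n \<Longrightarrow> is_lub_in (Cset n) (leC_lev n) A (lub_in (Cset n) (leC_lev n) (A :: 'a U set))"
  by (rule lub_in_is_lub[OF omega_algebraic_Cset])

lemma botC_lub: "is_lub_in (Cset n) (leC_lev n) {} (botC n :: 'a U)"
  unfolding botC_def by (rule is_lub_in_Cset) simp

lemma botC_in: "(botC n :: 'a U) \<in> Cset n"
  using is_lub_in_mem[OF botC_lub] .

lemma botC_le: "x \<in> Cset n \<Longrightarrow> leC_lev n (botC n) (x :: 'a U)"
  using is_lub_in_least[OF botC_lub] by blast

lemma botC_compact: "compact_in (Cset n) (leC_lev n) (botC n :: 'a U)"
  using compact_in_lub_empty[OF botC_lub] .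

lemma joinC_lub: "x \<in> Cset n \<Longrightarrow> y \<in> Cset n \<Longrightarrow> is_lub_in (Cset n) (leC_lev n) {x, y} (joinC n x y :: 'a U)"
  unfolding joinC_def by (rule is_lub_in_Cset) simp

lemma joinC_in: "x \<in> Cset n \<Longrightarrow> y \<in> Cset n \<Longrightarrow> (joinC n x y :: 'a U) \<in> Cset n"
  using is_lub_in_mem[OF joinC_lub] .

lemma joinC_le_iff:
  assumes xyz: "x \<in> Cset n" "y \<in> Cset n" "z \<in> Cset n"
  shows "leC_lev n (joinC n x y :: 'a U) z \<longleftrightarrow> leC_lev n x z \<and> leC_lev n y z"
proof
  assume j: "leC_lev n (joinC n x y) z"
  have "leC_lev n x (joinC n x y)" "leC_lev n y (joinC n x y)"
    using is_lub_in_upper[OF joinC_lub[OF xyz(1,2)]] by auto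
  then show "leC_lev n x z \<and> leC_lev n y z"
    using poset_on_trans[OF poset_on_Cset _ joinC_in[OF xyz(1,2)] xyz(3) _ j] xyz by blast
next
  assume "leC_lev n x z \<and> leC_lev n y z"
  then show "leC_lev n (joinC n x y) z" using is_lub_in_least[OF joinC_lub[OF xyz(1,2)] xyz(3)] by blast
qed

lemma botC_Suc: "(botC (Suc n) :: 'a U) = UPair (supF {}) (botC n)"
proof -
  have "is_lub_in (prodS (Dset n) (Cset n)) (prodLe (leD_lev n) (leC_lev n)) {}
      (UPair (supF {}) (botC n :: 'a U))"
    by (rule is_lub_in_prod) (use is_lub_in_Dset[of "{}"] botC_lub in simp_all)
  then show ?thesis unfolding botC_def[of "Suc n"] Cset_Suc
    by (rule lub_in_eq[OF poset_on_prod[OF poset_on_Dset poset_on_Cset]])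
qed

lemma joinC_Suc:
  assumes a: "a \<in> Dset n" "a' \<in> Dset n" and b: "b \<in> Cset n" "b' \<in> Cset n"
  shows "joinC (Suc n) (UPair a b) (UPair a' b') = UPair (supF {a, a'}) (joinC n b b' :: 'a U)"
proof -
  have "is_lub_in (prodS (Dset n) (Cset n)) (prodLe (leD_lev n) (leC_lev n)) {UPair a b, UPair a' b'}
      (UPair (supF {a, a'}) (joinC n b b' :: 'a U))"
    by (rule is_lub_in_prod) (use a b is_lub_in_Dset[of "{a, a'}"] joinC_lub[OF b] in simp_all)
  then show ?thesis
    unfolding joinC_def[of "Suc n"] Cset_Suc
      by (rule lub_in_eq[OF poset_on_prod[OF poset_on_Dset poset_on_Cset]])
qed

lemma pC_botC: "pC n (botC (Suc n) :: 'a U) = botC n"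
proof -
  have "is_lub_in (Cset n) (leC_lev n) (pC n ` {}) (pC n (botC (Suc n) :: 'a U))"
    by (rule ep_pair_proj_lub[OF ep_pair_C _ botC_lub]) simp
  then show ?thesis unfolding botC_def[of n] by (intro lub_in_eq[OF poset_on_Cset, symmetric]) simp
qed

lemma pC_joinC:
  assumes xy: "x \<in> Cset (Suc n)" "y \<in> Cset (Suc n)"
  shows "pC n (joinC (Suc n) x y :: 'a U) = joinC n (pC n x) (pC n y)"
proof -
  have "is_lub_in (Cset n) (leC_lev n) (pC n ` {x, y}) (pC n (joinC (Suc n) x y :: 'a U))"
    by (rule ep_pair_proj_lub[OF ep_pair_C _ joinC_lub[OF xy]]) (use xy in simp)
  then show ?thesis unfolding joinC_def[of n] by (intro lub_in_eq[OF poset_on_Cset, symmetric]) simp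
qed

lemma belowD_mono: "isD (t::'a ty) \<Longrightarrow> leD_lev n f f' \<Longrightarrow> belowD t n f \<Longrightarrow> belowD t n f'"
proof (induction t)
  case (Psi a) then show ?case using appD_mono_fun[of "lev n" f f' "botC n"] by (auto simp: leD_lev_def)
next
  case (Arr k r) then show ?case using appD_mono_fun[of "lev n" f f' "semC k n"]
    by (auto simp: leD_lev_def)
qed auto

lemma valD_compact: "isD (t::'a ty) \<Longrightarrow> compactR (valD t n c)"
  by (induction t) (auto simp: compactR_sup compactR_bot valR_compact)

lemma belowC_mono:
  "isC (t::'a ty) \<Longrightarrow> c \<in> Cset n \<Longrightarrow> c' \<in> Cset n \<Longrightarrow> leC_lev n c c' \<Longrightarrow> belowC t n c \<Longrightarrow> belowC t n c'"
proof (induction t arbitrary: n c c')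
  case (Times d k)
  show ?case
  proof (cases n)
    case (Suc m)
    have c: "c \<in> prodS (Dset m) (Cset m)" "c' \<in> prodS (Dset m) (Cset m)"
      using Times.prems(2,3) Suc Cset_Suc by auto
    have "prodLe (leD_lev m) (leC_lev m) c c'" using Times.prems(4) Suc by (simp add: Cset_Suc)
    then have "leD_lev m (fstU c) (fstU c')" "leC_lev m (sndU c) (sndU c')"
      using prodLe_iff[OF c] by simp_all
    moreover have "sndU c \<in> Cset m" "sndU c' \<in> Cset m" using prodS_cases[OF c(1)] prodS_cases[OF c(2)]
      by auto
    ultimately show ?thesis using Times belowD_mono Suc by auto
  qed (use Times in simp)
qed auto

lemma valD_mono:
  "isD (t::'a ty) \<Longrightarrow> c \<in> Cset n \<Longrightarrow> c' \<in> Cset n \<Longrightarrow> leC_lev n c c' \<Longrightarrow> valD t n c \<le> valD t n c'"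
  by (induction t) (auto intro: le_supI1 le_supI2 dest: belowC_mono)

lemma semD_in: "isD (t::'a ty) \<Longrightarrow> semD t n \<in> Dset n"
  unfolding semD_def Dset_def UFun_in_D_of using valD_mono enum_Cset by (simp add: leC_lev_def)

lemma semC_in: "isC (t::'a ty) \<Longrightarrow> semC t n \<in> Cset n"
proof (induction t arbitrary: n)
  case (Times d k)
  then show ?case using semD_in by (cases n) (simp_all add: Cset_0 Cset_Suc)
qed (auto simp: botC_in joinC_in)

lemma appD_eD:
  assumes f: "f \<in> Dset n" and x: "x \<in> Cset (Suc n)"
  shows "appD (lev (Suc n)) (eD n f) (x :: 'a U) = appD (lev n) f (pC n x)"
  unfolding eD_pD
  by (rule appD_fun_emb[OF omega_algebraic_lev omega_algebraic_lev])
     (use ep_pair_C[of n] f x in \<open>simp_all add: Cset_def leC_lev_def Dset_def\<close>)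

lemma pD_semD_if_valD_eC:
  assumes t: "isD (t :: 'a ty)" and v: "\<forall>c\<in>Cset n. valD t (Suc n) (eC n c) = valD t n c"
  shows "pD n (semD t (Suc n)) = semD t n"
proof (rule D_of_eqI)
  show "pD n (semD t (Suc n)) \<in> D_of (lev n)" "semD t n \<in> D_of (lev n)"
    using ep_pair_proj_in[OF ep_pair_D semD_in[OF t]] semD_in[OF t] unfolding Dset_def .
  fix i
  have c: "(enum (lev n) i :: 'a U) \<in> Cset n" by (rule enum_Cset)
  have "compact_in (Cset (Suc n)) (leC_lev (Suc n)) (eC n (enum (lev n) i :: 'a U))"
    by (rule ep_pair_emb_compact[OF ep_pair_C poset_on_Cset enum_Cset_compact])
  then obtain j where j: "enum (lev (Suc n)) j = eC n (enum (lev n) i :: 'a U)" using enum_Cset_surj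
    by blast
  have "unF (pD n (semD t (Suc n))) i = appD (lev (Suc n)) (semD t (Suc n)) (enum (lev (Suc n)) j)"
    unfolding eD_pD j by simp
  also have "\<dots> = valD t (Suc n) (enum (lev (Suc n)) j)"
    using appD_enum[OF omega_algebraic_lev] semD_in[OF t] by (simp add: Dset_def)
  also have "\<dots> = valD t n (enum (lev n) i)" using j v c by simp
  finally show "unF (pD n (semD t (Suc n))) i = unF (semD t n) i" by simp
qed

lemma sem_eC_compat:
  "(isC (t::'a ty) \<longrightarrow> pC n (semC t (Suc n)) = semC t n \<and> (\<forall>c\<in>Cset n. belowC t (Suc n) (eC n c) = belowC t n c))
 \<and> (isD t \<longrightarrow> (\<forall>c\<in>Cset n. valD t (Suc n) (eC n c) = valD t n c)
      \<and> (\<forall>f\<in>Dset n. belowD t (Suc n) (eD n f) = belowD t n f))"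
proof (induction t arbitrary: n)
  case (Psi a)
  show ?case using appD_eD[OF _ botC_in] pC_botC by simp
next
  case Om
  show ?case by (simp add: pC_botC)
next
  case (Conj a b)
  show ?case using Conj.IH pC_joinC[OF semC_in semC_in] by auto
next
  case (Arr k r)
  show ?case using Arr.IH appD_eD[OF _ semC_in] by auto
next
  case (Times d k)
  show ?case
  proof (intro conjI impI)
    assume "isC (Times d k)"
    then have dk: "isD d" "isC k" by auto
    show "pC n (semC (Times d k) (Suc n)) = semC (Times d k) n"
      using Times.IH dk pD_semD_if_valD_eC[OF dk(1)] by (cases n) (simp_all add: eC_pC_0 eC_pC_Suc)
    show "\<forall>c\<in>Cset n. belowC (Times d k) (Suc n) (eC n c) = belowC (Times d k) n c"
    proof (cases n)
      case (Suc m)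
      have "eC (Suc m) c = UPair (eD m (fstU c)) (eC m (sndU c))" "fstU c \<in> Dset m" "sndU c \<in> Cset m"
        if "c \<in> Cset (Suc m)" for c :: "'a U"
        using that by (auto elim!: prodS_E simp: Cset_Suc eC_pC_Suc)
      then show ?thesis using Times.IH dk Suc by auto
    qed (simp add: eC_pC_0)
  qed simp_all
qed

lemma pC_semC: "isC (t::'a ty) \<Longrightarrow> pC n (semC t (Suc n)) = semC t n"
  using sem_eC_compat by blast

lemma belowC_eC: "isC (t::'a ty) \<Longrightarrow> c \<in> Cset n \<Longrightarrow> belowC t (Suc n) (eC n c) = belowC t n c"
  using sem_eC_compat by blast

lemma pD_semD: "isD (t::'a ty) \<Longrightarrow> pD n (semD t (Suc n)) = semD t n"
  using sem_eC_compat pD_semD_if_valD_eC by blast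

lemma belowD_eD: "isD (t::'a ty) \<Longrightarrow> f \<in> Dset n \<Longrightarrow> belowD t (Suc n) (eD n f) = belowD t n f"
  using sem_eC_compat by blast

lemma step_fun_Dset_compact:
  assumes "compact_in (Cset n) (leC_lev n) (k :: 'a U)" and "compactR a"
  shows "compact_in (Dset n) (leD_lev n) (step_fun (lev n) k a)"
  unfolding Dset_def leD_lev_def
  by (rule step_fun_compact[OF omega_algebraic_lev _ assms(2)])
     (use assms(1) in \<open>simp add: KC_def Cset_def leC_lev_def\<close>)

lemma step_fun_leD_lev_iff:
  assumes k: "compact_in (Cset n) (leC_lev n) (k :: 'a U)" and f: "f \<in> Dset n"
  shows "leD_lev n (step_fun (lev n) k a) f \<longleftrightarrow> a \<le> appD (lev n) f k"
proof -
  obtain i where i: "enum (lev n) i = k" using enum_Cset_surj[OF k] by blast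
  show ?thesis
    using step_fun_le_iff[OF omega_algebraic_lev _ i] appD_enum[OF omega_algebraic_lev, of f n i] f i
    by (simp add: leD_lev_def Dset_def)
qed

lemma semD_step_fun:
  assumes "\<And>c. c \<in> Cset n \<Longrightarrow> valD t n c = (if leC_lev n k c then a else bot)"
  shows "semD t n = step_fun (lev n) (k :: 'a U) a"
  unfolding semD_def step_fun_def using assms enum_Cset by (simp add: leC_lev_def)

lemma semD_Om_le: "leD_lev n (semD Om n) f"
  by (simp add: leD_lev_def leD_of_def)

lemma semD_Om_compact: "compact_in (Dset n) (leD_lev n) (semD Om n)"
  unfolding semD_Om by (rule compact_in_lub_empty[OF is_lub_in_Dset]) simp

lemma leD_lev_semD_Conj_iff:
  "leD_lev n (semD (Conj a b) n) f \<longleftrightarrow> leD_lev n (semD a n) f \<and> leD_lev n (semD b n) f"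
  by (auto simp: leD_lev_def leD_of_def)

lemma semD_Conj_compact:
  assumes "isD (a::'a ty)" "isD b"
    and "compact_in (Dset n) (leD_lev n) (semD a n)" "compact_in (Dset n) (leD_lev n) (semD b n)"
  shows "compact_in (Dset n) (leD_lev n) (semD (Conj a b) n)"
proof -
  have sub: "{semD a n, semD b n} \<subseteq> Dset n" using semD_in assms(1,2) by auto
  show ?thesis
    unfolding semD_Conj
    by (rule compact_in_finite_lub[OF poset_on_Dset _ _ is_lub_in_Dset[OF sub]]) (use assms(3,4) in auto)
qed

lemma leC_lev_semC_Conj_iff:
  "isC (a::'a ty) \<Longrightarrow> isC b \<Longrightarrow> c \<in> Cset n
    \<Longrightarrow> leC_lev n (semC (Conj a b) n) c \<longleftrightarrow> leC_lev n (semC a n) c \<and> leC_lev n (semC b n) c"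
  using joinC_le_iff[OF semC_in semC_in] by simp

lemma semC_Conj_compact:
  assumes "isC (a::'a ty)" "isC b"
    and "compact_in (Cset n) (leC_lev n) (semC a n)" "compact_in (Cset n) (leC_lev n) (semC b n)"
  shows "compact_in (Cset n) (leC_lev n) (semC (Conj a b) n)"
  using compact_in_finite_lub[OF poset_on_Cset _ _ joinC_lub[OF semC_in semC_in]] assms by simp

lemma sem_compact_below:
  "(isC (t::'a ty) \<longrightarrow> depth t \<le> n \<longrightarrow> compact_in (Cset n) (leC_lev n) (semC t n)
      \<and> (\<forall>c\<in>Cset n. belowC t n c = leC_lev n (semC t n) c))
 \<and> (isD t \<longrightarrow> depth t \<le> n \<longrightarrow> compact_in (Dset n) (leD_lev n) (semD t n)
      \<and> (\<forall>f\<in>Dset n. belowD t n f = leD_lev n (semD t n) f))"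
proof (induction t arbitrary: n)
  case (Psi a)
  have "semD (Psi a) n = step_fun (lev n) (botC n) a" by (rule semD_step_fun) (simp add: botC_le)
  then show ?case using step_fun_Dset_compact[OF botC_compact] step_fun_leD_lev_iff[OF botC_compact]
    by simp
next
  case Om
  show ?case using botC_compact botC_le semD_Om_compact semD_Om_le by simp
next
  case (Conj a b)
  show ?case
  proof (intro conjI impI)
    assume "isC (Conj a b)" "depth (Conj a b) \<le> n"
    then show "compact_in (Cset n) (leC_lev n) (semC (Conj a b) n)"
      "\<forall>c\<in>Cset n. belowC (Conj a b) n c = leC_lev n (semC (Conj a b) n) c"
      using Conj.IH semC_Conj_compact leC_lev_semC_Conj_iff by auto
  next
    assume "isD (Conj a b)" "depth (Conj a b) \<le> n"
    then show "compact_in (Dset n) (leD_lev n) (semD (Conj a b) n)"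
      "\<forall>f\<in>Dset n. belowD (Conj a b) n f = leD_lev n (semD (Conj a b) n) f"
      using Conj.IH semD_Conj_compact leD_lev_semD_Conj_iff by auto
  qed
next
  case (Arr k r)
  show ?case
  proof (intro conjI impI)
    assume kr: "isD (Arr k r)" "depth (Arr k r) \<le> n"
    then have IH: "compact_in (Cset n) (leC_lev n) (semC k n)"
      "\<forall>c\<in>Cset n. belowC k n c = leC_lev n (semC k n) c"
      using Arr.IH by auto
    then have "semD (Arr k r) n = step_fun (lev n) (semC k n) (valR r)" by (intro semD_step_fun) simp
    then show "compact_in (Dset n) (leD_lev n) (semD (Arr k r) n)"
      "\<forall>f\<in>Dset n. belowD (Arr k r) n f = leD_lev n (semD (Arr k r) n) f"
      using step_fun_Dset_compact[OF IH(1) valR_compact] step_fun_leD_lev_iff[OF IH(1)] kr by auto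
  qed simp_all
next
  case (Times d k)
  show ?case
  proof (intro conjI impI)
    assume dk: "isC (Times d k)" "depth (Times d k) \<le> n"
    then obtain m where m: "n = Suc m" by (cases n) auto
    have IH: "compact_in (Dset m) (leD_lev m) (semD d m)" "compact_in (Cset m) (leC_lev m) (semC k m)"
      "\<forall>f\<in>Dset m. belowD d m f = leD_lev m (semD d m) f" "\<forall>c\<in>Cset m. belowC k m c = leC_lev m (semC k m) c"
      using Times.IH dk m by auto
    show "compact_in (Cset n) (leC_lev n) (semC (Times d k) n)"
      using compact_prod_UPair[OF poset_on_Dset poset_on_Cset IH(1,2)] by (simp add: m Cset_Suc)
    show "\<forall>c\<in>Cset n. belowC (Times d k) n c = leC_lev n (semC (Times d k) n) c"
      using IH(3,4) by (auto elim!: prodS_E simp: m Cset_Suc)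
  qed simp_all
qed

lemma semC_compact: "isC (t::'a ty) \<Longrightarrow> depth t \<le> n \<Longrightarrow> compact_in (Cset n) (leC_lev n) (semC t n)"
  using sem_compact_below by blast

lemma semD_compact: "isD (t::'a ty) \<Longrightarrow> depth t \<le> n \<Longrightarrow> compact_in (Dset n) (leD_lev n) (semD t n)"
  using sem_compact_below by blast

lemma belowC_iff: "isC (t::'a ty) \<Longrightarrow> depth t \<le> n \<Longrightarrow> c \<in> Cset n \<Longrightarrow> belowC t n c \<longleftrightarrow> leC_lev n (semC t n) c"
  using sem_compact_below by blast

lemma belowD_iff: "isD (t::'a ty) \<Longrightarrow> depth t \<le> n \<Longrightarrow> f \<in> Dset n \<Longrightarrow> belowD t n f \<longleftrightarrow> leD_lev n (semD t n) f"
  using sem_compact_below by blast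

interpretation C: leveled_semantics Cset leC_lev eC pC isC semC belowC depth
  by unfold_locales
     (simp_all add: omega_algebraic_Cset ep_pair_C semC_in pC_semC belowC_eC belowC_iff semC_compact,
      use belowC_mono in blast)

section \<open>Soundness and completeness of the type theories\<close>

lemma leD_leC_types: "leD s t \<Longrightarrow> isD s \<and> isD t" "leC s t \<Longrightarrow> isC s \<and> isC t"
  by (induction rule: leD_leC.inducts) (auto dest: leR_isR isR_isD simp: compactR_bot)

lemma semC_Times_Om: "semC (Times Om Om) n = semC Om n"
  using botC_in[of 0] botC_Suc by (cases n) (simp_all add: semD_Om Cset_0)

lemma semC_Times_Conj:
  assumes "isD d1" "isD d2" "isC k1" "isC k2"
  shows "semC (Times (Conj d1 d2) (Conj k1 k2)) n = semC (Conj (Times d1 k1) (Times d2 k2)) n"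
proof (cases n)
  case 0 then show ?thesis using semC_in[of "Conj (Times d1 k1) (Times d2 k2)" 0] assms
    by (simp add: Cset_0)
next
  case (Suc m)
  then show ?thesis using joinC_Suc[OF semD_in semD_in semC_in semC_in] assms by (simp add: semD_Conj)
qed

lemma sem_sound:
  shows "leD (s::'a ty) t \<Longrightarrow> \<forall>n. leD_lev n (semD t n) (semD s n)"
    and "leC (s::'a ty) t \<Longrightarrow> \<forall>n. leC_lev n (semC t n) (semC s n)"
proof (induction rule: leD_leC.inducts)
  case (D_refl s) then show ?case using poset_on_refl[OF poset_on_Dset semD_in] by blast
next
  case (D_trans s t u)
  then show ?case using poset_on_trans[OF poset_on_Dset semD_in semD_in semD_in] leD_leC_types by blast
next
  case (C_refl s) then show ?case using poset_on_refl[OF poset_on_Cset semC_in] by blast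
next
  case (C_trans s t u)
  then show ?case using poset_on_trans[OF poset_on_Cset semC_in semC_in semC_in] leD_leC_types by blast
next
  case (C_conjL s t) then show ?case using is_lub_in_upper[OF joinC_lub[OF semC_in semC_in]] by simp
next
  case (C_conjR s t) then show ?case using is_lub_in_upper[OF joinC_lub[OF semC_in semC_in]] by simp
next
  case (C_top s) then show ?case using botC_le[OF semC_in] by simp
next
  case (C_glb r s t)
  then have "isC r" "isC s" "isC t" using leD_leC_types by blast+
  then show ?case using joinC_le_iff[OF semC_in semC_in semC_in] C_glb.IH by simp
next
  case (D_fromR r1 r2)
  then have "isR r1" "isR r2" using leR_isR by blast+
  then show ?case using leR_valR[OF D_fromR] by (simp add: leD_lev_semD_iff valD_isR)
next
  case C_omTimes
  then show ?case using poset_on_refl[OF poset_on_Cset semC_in[of Om]] by (simp add: semC_Times_Om)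
next
  case (C_timesConj d1 d2 k1 k2)
  then have "isC (Conj (Times d1 k1) (Times d2 k2))" by simp
  then show ?case using semC_Times_Conj[OF C_timesConj] poset_on_refl[OF poset_on_Cset semC_in] by metis
next
  case (D_arrMono k2 k1 r1 r2)
  then have k: "isC k1" "isC k2" using leD_leC_types by blast+
  have "(if belowC k2 n c then valR r2 else bot) \<le> (if belowC k1 n c then valR r1 else bot)"
    if "c \<in> Cset n" for n c
    using C.below_antimono[OF k D_arrMono.IH that] leR_valR[OF D_arrMono.hyps(2)] by auto
  then show ?case using enum_Cset by (simp add: leD_lev_semD_iff)
next
  case (C_timesMono d1 d2 k1 k2)
  show ?case
  proof
    fix n show "leC_lev n (semC (Times d2 k2) n) (semC (Times d1 k1) n)"
      using C_timesMono.IH by (cases n) (simp_all add: Cset_Suc Cset_0)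
  qed
qed (simp_all add: leD_lev_semD_iff)

fun proj1_ty :: "'a ty \<Rightarrow> 'a ty" where
  "proj1_ty (Conj a b) = Conj (proj1_ty a) (proj1_ty b)"
| "proj1_ty (Times d k) = d"
| "proj1_ty _ = Om"

fun proj2_ty :: "'a ty \<Rightarrow> 'a ty" where
  "proj2_ty (Conj a b) = Conj (proj2_ty a) (proj2_ty b)"
| "proj2_ty (Times d k) = k"
| "proj2_ty _ = Om"

lemma size_proj_ty: "size (proj1_ty s) \<le> size s" "size (proj2_ty s) \<le> size s"
  by (induction s) auto

lemma leC_Times_proj_ty:
  "isC s \<Longrightarrow> isD (proj1_ty s) \<and> isC (proj2_ty s) \<and> leC s (Times (proj1_ty s) (proj2_ty s))"
proof (induction s)
  case Om then show ?case using C_omTimes by simp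
next
  case (Conj a b)
  then have ab: "isC a" "isC b"
    and IH: "isD (proj1_ty a)" "isC (proj2_ty a)" "leC a (Times (proj1_ty a) (proj2_ty a))"
    "isD (proj1_ty b)" "isC (proj2_ty b)" "leC b (Times (proj1_ty b) (proj2_ty b))" by auto
  have "leC (Conj a b) (Conj (Times (proj1_ty a) (proj2_ty a)) (Times (proj1_ty b) (proj2_ty b)))"
    by (rule C_glb[OF C_trans[OF C_conjL[OF ab] IH(3)] C_trans[OF C_conjR[OF ab] IH(6)]])
  then show ?case using C_trans[OF _ C_timesConj[OF IH(1,4,2,5)]] IH by simp
next
  case (Times d k) then show ?case using C_refl[of "Times d k"] by simp
qed auto

lemma semC_Suc_proj_ty:
  "isC (s::'a ty) \<Longrightarrow> semC s (Suc m) = UPair (semD (proj1_ty s) m) (semC (proj2_ty s) m)"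
proof (induction s)
  case Om then show ?case using botC_Suc by (simp add: semD_Om)
next
  case (Conj a b)
  then have "isD (proj1_ty a)" "isD (proj1_ty b)" "isC (proj2_ty a)" "isC (proj2_ty b)" "isC a" "isC b"
    using leC_Times_proj_ty by auto
  then show ?case using Conj.IH joinC_Suc[OF semD_in semD_in semC_in semC_in] by (simp add: semD_Conj)
qed auto

lemma leD_Om_Arr: "isC k \<Longrightarrow> leD Om (Arr k (Psi bot))"
  by (rule D_trans[OF D_omArr D_arrMono[OF C_top R_bot2]])

text \<open>The first premise is the part of the completeness induction needed for the arrow types
  occurring in \<open>s\<close>.\<close>

lemma leD_Arr_valD:
  assumes k: "isC (k::'a ty)" "depth k \<le> n"
  shows "\<forall>k'. size k' < size s \<longrightarrow> isC k' \<longrightarrow> (\<forall>m. leC_lev m (semC k' m) (semC k m)) \<longrightarrow> leC k k'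
    \<Longrightarrow> isD s \<Longrightarrow> depth s \<le> n \<Longrightarrow> leD s (Arr k (Psi (valD s n (semC k n))))"
proof (induction s)
  case (Psi a)
  then have "leD (Psi a) (Arr k (Psi a))" using D_trans[OF D_psiArr1 D_arrMono[OF C_top[OF k(1)] R_refl]]
    by simp
  then show ?case by simp
next
  case Om then show ?case using leD_Om_Arr[OF k(1)] by simp
next
  case (Conj s1 s2)
  define v1 v2 where "v1 = valD s1 n (semC k n)" and "v2 = valD s2 n (semC k n)"
  have s: "isD s1" "isD s2" and c: "compactR v1" "compactR v2"
    using Conj.prems valD_compact unfolding v1_def v2_def by auto
  note D_trans[trans]
  have "leD s1 (Arr k (Psi v1))" "leD s2 (Arr k (Psi v2))"
    using Conj.IH Conj.prems unfolding v1_def v2_def by auto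
  then have "leD (Conj s1 s2) (Conj (Arr k (Psi v1)) (Arr k (Psi v2)))"
    by (intro D_glb D_trans[OF D_conjL[OF s]] D_trans[OF D_conjR[OF s]])
  also have "leD \<dots> (Arr k (Conj (Psi v1) (Psi v2)))" by (rule D_arrConj) (use k c in simp_all)
  also have "leD \<dots> (Arr k (Psi (sup v1 v2)))" by (rule D_arrMono[OF C_refl[OF k(1)] R_join2[OF c]])
  finally show ?case unfolding v1_def v2_def by simp
next
  case (Arr k' r')
  then have s: "isC k'" "isR r'" "depth k' \<le> n" by auto
  show ?case
  proof (cases "belowC k' n (semC k n)")
    case True
    then have "leC_lev n (semC k' n) (semC k n)" using belowC_iff[OF s(1,3) semC_in[OF k(1)]] by simp
    then have "leC k k'" using Arr.prems C.sem_le_all_levels[OF C.sem_inv_limit[OF k(1)] s(1,3)] s(1)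
      by simp
    then have "leD (Arr k' r') (Arr k (Psi (valR r')))"
      by (rule D_arrMono) (use leR_Psi_valR[OF s(2)] in blast)
    then show ?thesis using True by simp
  next
    case False
    then show ?thesis using D_trans[OF D_top leD_Om_Arr[OF k(1)]] s by simp
  qed
qed auto

lemma valD_le_if_leD_lev:
  assumes "leD_lev n (semD t n) (semD s n)" and "compact_in (Cset n) (leC_lev n) c"
  shows "valD t n c \<le> valD s n c"
  using assms enum_Cset_surj leD_lev_semD_iff by metis

lemma leD_complete_step:
  assumes s: "isD (s::'a ty)" and t: "isD t" and le: "\<forall>n. leD_lev n (semD t n) (semD s n)"
    and IHD: "\<And>s' t' :: 'a ty. size s' + size t' < size s + size t \<Longrightarrow> isD s' \<Longrightarrow> isD t'
      \<Longrightarrow> \<forall>n. leD_lev n (semD t' n) (semD s' n) \<Longrightarrow> leD s' t'"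
    and IHC: "\<And>s' t' :: 'a ty. size s' + size t' < size s + size t \<Longrightarrow> isC s' \<Longrightarrow> isC t'
      \<Longrightarrow> \<forall>n. leC_lev n (semC t' n) (semC s' n) \<Longrightarrow> leC s' t'"
  shows "leD s t"
proof (cases t)
  case Om then show ?thesis using D_top[OF s] by simp
next
  case (Conj t1 t2)
  then have "\<forall>n. leD_lev n (semD t1 n) (semD s n)" "\<forall>n. leD_lev n (semD t2 n) (semD s n)"
    using le leD_lev_semD_Conj_iff by auto
  then have "leD s t1" "leD s t2" using IHD[of s] s t Conj by auto
  then show ?thesis using D_glb Conj by blast
next
  case (Psi a)
  define v where "v = valD s (depth s) (semC Om (depth s))"
  have a: "compactR a" and v: "compactR v" using t Psi valD_compact[OF s] unfolding v_def by auto
  have "valD t (depth s) (semC Om (depth s)) \<le> v"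
    unfolding v_def by (rule valD_le_if_leD_lev) (use le botC_compact in simp_all)
  then have "leD (Arr Om (Psi v)) (Arr Om (Psi a))"
    using leR_Psi_antimono[OF v a] Psi D_arrMono[OF C_refl[of Om]] by simp
  moreover have "leD s (Arr Om (Psi v))" unfolding v_def
    by (rule leD_Arr_valD) (use s IHC Psi in simp_all)
  ultimately have "leD s (Arr Om (Psi a))" by (rule D_trans[rotated])
  then show ?thesis using D_trans[OF _ D_psiArr2[OF a]] Psi by simp
next
  case (Arr k r)
  define n where "n = max (depth s) (depth k)"
  have kr: "isC k" "isR r" and dn: "depth s \<le> n" "depth k \<le> n" using t Arr unfolding n_def by auto
  define v where "v = valD s n (semC k n)"
  have "valD t n (semC k n) \<le> v" unfolding v_def
    by (rule valD_le_if_leD_lev[OF _ semC_compact[OF kr(1) dn(2)]]) (use le in simp)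
  moreover have "belowC k n (semC k n)"
    using belowC_iff[OF kr(1) dn(2) semC_in[OF kr(1)]] poset_on_refl[OF poset_on_Cset semC_in[OF kr(1)]]
      by simp
  ultimately have "valR r \<le> valR (Psi v)" using Arr unfolding v_def by simp
  moreover have "isR (Psi v)" using valD_compact[OF s] unfolding v_def by simp
  ultimately have "leR (Psi v) r" using leR_iff_valR kr(2) by blast
  moreover have "leD s (Arr k (Psi v))" unfolding v_def
    by (rule leD_Arr_valD[OF kr(1) dn(2)]) (use s dn(1) IHC[of k] Arr kr(1) in simp_all)
  ultimately show ?thesis using D_trans D_arrMono[OF C_refl[OF kr(1)]] Arr by blast
qed (use t in simp)

lemma leC_complete_step:
  assumes s: "isC (s::'a ty)" and t: "isC t" and le: "\<forall>n. leC_lev n (semC t n) (semC s n)"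
    and IHD: "\<And>s' t' :: 'a ty. size s' + size t' < size s + size t \<Longrightarrow> isD s' \<Longrightarrow> isD t'
      \<Longrightarrow> \<forall>n. leD_lev n (semD t' n) (semD s' n) \<Longrightarrow> leD s' t'"
    and IHC: "\<And>s' t' :: 'a ty. size s' + size t' < size s + size t \<Longrightarrow> isC s' \<Longrightarrow> isC t'
      \<Longrightarrow> \<forall>n. leC_lev n (semC t' n) (semC s' n) \<Longrightarrow> leC s' t'"
  shows "leC s t"
proof (cases t)
  case Om then show ?thesis using C_top[OF s] by simp
next
  case (Conj t1 t2)
  then have "isC t1" "isC t2" using t by auto
  then have "\<forall>n. leC_lev n (semC t1 n) (semC s n)" "\<forall>n. leC_lev n (semC t2 n) (semC s n)"
    using le joinC_le_iff[OF semC_in semC_in semC_in[OF s]] Conj by auto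
  then have "leC s t1" "leC s t2" using IHC[of s] s \<open>isC t1\<close> \<open>isC t2\<close> Conj by auto
  then show ?thesis using C_glb Conj by blast
next
  case (Times d k)
  have dk: "isD d" "isC k" using t Times by auto
  have pr: "isD (proj1_ty s)" "isC (proj2_ty s)" "leC s (Times (proj1_ty s) (proj2_ty s))"
    using leC_Times_proj_ty[OF s] by auto
  have "leD_lev m (semD d m) (semD (proj1_ty s) m) \<and> leC_lev m (semC k m) (semC (proj2_ty s) m)" for m
    using le[rule_format, of "Suc m"] Times semC_Suc_proj_ty[OF s, of m] by (simp add: Cset_Suc)
  moreover have "size (proj1_ty s) + size d < size s + size t" "size (proj2_ty s) + size k < size s + size t"
    using size_proj_ty[of s] Times by auto
  ultimately have "leD (proj1_ty s) d" "leC (proj2_ty s) k" using IHD IHC pr dk by auto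
  then show ?thesis using C_trans[OF pr(3) C_timesMono] Times by blast
qed (use t in simp_all)

lemma sem_complete:
  "(isD (s::'a ty) \<longrightarrow> isD t \<longrightarrow> (\<forall>n. leD_lev n (semD t n) (semD s n)) \<longrightarrow> leD s t)
 \<and> (isC s \<longrightarrow> isC t \<longrightarrow> (\<forall>n. leC_lev n (semC t n) (semC s n)) \<longrightarrow> leC s t)"
proof (induction "size s + size t" arbitrary: s t rule: less_induct)
  case less
  then show ?case using leD_complete_step[of s t] leC_complete_step[of s t] by blast
qed

section \<open>Definability of compact elements\<close>

lemma semD_Arr_step_fun:
  "isC (k::'a ty) \<Longrightarrow> depth k \<le> n \<Longrightarrow> semD (Arr k r) n = step_fun (lev n) (semC k n) (valR r)"
  by (rule semD_step_fun) (simp add: belowC_iff)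

lemma definable_Dset_if_Cset:
  assumes C: "\<And>c. compact_in (Cset n) (leC_lev n) (c::'a U) \<Longrightarrow> \<exists>k. isC k \<and> depth k \<le> n \<and> semC k n = c"
    and f: "compact_in (Dset n) (leD_lev n) (f::'a U)"
  shows "\<exists>d. isD d \<and> depth d \<le> n \<and> semD d n = f"
proof -
  have "compact_in (D_of (lev n)) (leD_of (lev n)) f" using f by (simp add: Dset_def leD_lev_def)
  then obtain F where F: "finite F" "F \<subseteq> steps_below (lev n) f" "f = supF F"
    using compact_D_of_finite_steps[OF omega_algebraic_lev] by blast
  have "\<exists>d. isD d \<and> depth d \<le> n \<and> semD d n = supF G" if "finite G" "G \<subseteq> steps_below (lev n) f" for G
    using that
  proof (induction G rule: finite_induct)
    case empty then show ?case using semD_Om by (intro exI[of _ Om]) simp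
  next
    case (insert x G)
    then obtain d where d: "isD d" "depth d \<le> n" "semD d n = supF G" by blast
    obtain k a where x: "x = step_fun (lev n) k a" "k \<in> KC (lev n)" "compactR a"
      using insert.prems unfolding steps_below_def by blast
    obtain \<kappa> where \<kappa>: "isC \<kappa>" "depth \<kappa> \<le> n" "semC \<kappa> n = k"
      using C x(2) by (auto simp: KC_def Cset_def leC_lev_def)
    have "semD (Conj (Arr \<kappa> (Psi a)) d) n = supF (insert x G)"
      using semD_Arr_step_fun[OF \<kappa>(1,2)] \<kappa>(3) x(1) d(3) by (simp add: semD_Conj supF_def)
    then show ?case using \<kappa> d x(3) by (intro exI[of _ "Conj (Arr \<kappa> (Psi a)) d"]) simp
  qed
  then show ?thesis using F by blast
qed

lemma definable:
  "(compact_in (Cset n) (leC_lev n) (c::'a U) \<longrightarrow> (\<exists>k. isC k \<and> depth k \<le> n \<and> semC k n = c))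
 \<and> (compact_in (Dset n) (leD_lev n) (f::'a U) \<longrightarrow> (\<exists>d. isD d \<and> depth d \<le> n \<and> semD d n = f))"
proof (induction n arbitrary: c f)
  case 0
  have "semC Om 0 = c" if "compact_in (Cset 0) (leC_lev 0) (c::'a U)" for c
    using compact_in_mem[OF that] botC_in[of 0] by (simp add: Cset_0)
  then show ?case using definable_Dset_if_Cset[of 0] by (metis depth.simps(2) isC.simps(2) le0)
next
  case (Suc n)
  have "\<exists>k. isC k \<and> depth k \<le> Suc n \<and> semC k (Suc n) = c"
    if c: "compact_in (Cset (Suc n)) (leC_lev (Suc n)) (c::'a U)" for c
  proof -
    obtain d' c' where c': "c = UPair d' c'" "d' \<in> Dset n" "c' \<in> Cset n"
      using compact_in_mem[OF c] by (auto simp: Cset_Suc elim!: prodS_E)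
    then have "compact_in (Dset n) (leD_lev n) d'" "compact_in (Cset n) (leC_lev n) c'"
      using compact_prod_components[OF poset_on_Dset poset_on_Cset] c by (simp_all add: Cset_Suc)
    then obtain d k where "isD d" "depth d \<le> n" "semD d n = d'" "isC k" "depth k \<le> n" "semC k n = c'"
      using Suc.IH by blast
    then show ?thesis using c'(1) by (intro exI[of _ "Times d k"]) simp
  qed
  then show ?case using definable_Dset_if_Cset[of "Suc n"] by blast
qed

section \<open>The filter models of \<open>D\<close> and \<open>C\<close>\<close>

interpretation D: type_interpretation Dset leD_lev eD pD isD semD belowD depth leD
proof unfold_locales
  show "is_lub_in (Dset n) (leD_lev n) {semD s n, semD t n} (semD (Conj s t) n)" if "isD s" "isD t" for s t n
    unfolding semD_Conj by (rule is_lub_in_Dset) (use semD_in that in auto)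
qed (auto simp: semD_Om_le omega_algebraic_Dset ep_pair_D semD_in pD_semD belowD_eD belowD_iff semD_compact
       sem_sound(1) sem_complete definable intro: belowD_mono)

interpretation C: type_interpretation Cset leC_lev eC pC isC semC belowC depth leC
proof unfold_locales
  show "is_lub_in (Cset n) (leC_lev n) {semC s n, semC t n} (semC (Conj s t) n)" if "isC s" "isC t" for s t n
    using joinC_lub[OF semC_in semC_in] that by simp
qed (auto simp: botC_le sem_sound(2) sem_complete definable)

lemma order_iso_filters_D: "order_iso (filters {t::'a ty. isD t} leD) (\<subseteq>) (Dinf :: (nat \<Rightarrow> 'a U) set) leDinf"
proof -
  have eq: "Dinf = D.inv_limit" "leDinf = (\<lambda>x y. \<forall>n. leD_lev n (x n) (y n))"
    unfolding Dinf_def D.inv_limit_def leDinf_def by auto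
  show ?thesis unfolding eq by (rule D.order_iso_filters)
qed

lemma order_iso_filters_C: "order_iso (filters {t::'a ty. isC t} leC) (\<subseteq>) (Cinf :: (nat \<Rightarrow> 'a U) set) leCinf"
proof -
  have eq: "Cinf = C.inv_limit" "leCinf = (\<lambda>x y. \<forall>n. leC_lev n (x n) (y n))"
    unfolding Cinf_def C.inv_limit_def leCinf_def by auto
  show ?thesis unfolding eq by (rule C.order_iso_filters)
qed

end

theorem theorem3p21:
  assumes algebraic: "\<forall>x::'a::complete_lattice. x = Sup {c. compactR c \<and> c \<le> x}"
    and countable_basis: "countable {c::'a. compactR c}"
  shows "order_iso (filters {t::'a ty. isR t} leR) (\<subseteq>) (UNIV :: 'a set) (\<le>)
       \<and> order_iso (filters {t::'a ty. isD t} leD) (\<subseteq>) (Dinf :: (nat \<Rightarrow> 'a U) set) leDinf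
       \<and> order_iso (filters {t::'a ty. isC t} leC) (\<subseteq>) (Cinf :: (nat \<Rightarrow> 'a U) set) leCinf"
  using order_iso_filters_R[OF algebraic] order_iso_filters_D[OF algebraic countable_basis]
    order_iso_filters_C[OF algebraic countable_basis] by blast

end
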